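(* (i) If $X=(X_1,\dots,X_n)$ is a $K^n$-valued $K$-Gaussian random variable, then $\{X_1,\dots,X_n\}$ is an orthogonal set in $\mathcal{L}^\infty(\mathbb{P})$ if and only if $X_1,\dots,X_n$ are independent. (ii) If $X_1,\dots,X_n$ are independent $K$-valued $K$-Gaussian random variables, then the random vector $(X_1,\dots,X_n)$ is $K$-Gaussian.
   Context: $K$ is a local field (locally compact, non-discrete, totally disconnected topological field) with its non-archimedean absolute value $|\cdot|$ ($|x|=0\iff x=0$, $|xy|=|x||y|$, $|x+y|\le|x|\vee|y|$). $K^n$ is the Banach space over $K$ with norm $|(x_1,\dots,x_n)|=|x_1|\vee\dots\vee|x_n|$. In a normed space $(E,\|\cdot\|)$ over $K$ (norm satisfying $\|x\|=0\iff x=0$, $\|\alpha x\|=|\alpha|\|x\|$, $\|x+y\|\le\|x\|\vee\|y\|$), a subset $F$ is orthogonal if $\|\sum_{i=1}^m\alpha_ix_i\|=\bigvee_{i=1}^m|\alpha_i|\|x_i\|$ for every finite $\{x_1,\dots,x_m\}\subset F$ and $\alpha_i\in K$; orthonormal if moreover each element has norm $1$. $\mathcal{L}^\infty(\mathbb{P})$ is the space of measurable $f:\Omega\to K$ with $\operatorname{ess\,sup}|f|<\infty$, modulo a.s. equality, normed by $\|f\|_\infty=\operatorname{ess\,sup}|f|$. For a separable Banach space $E$ over $K$, an $E$-valued random variable $X$ is $K$-Gaussian if whenever $X_1,X_2$ are independent copies of $X$ and $(\alpha_{11},\alpha_{12}),(\alpha_{21},\alpha_{22})$ is an orthonormal pair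 in $K^2$, $(\alpha_{11}X_1+\alpha_{12}X_2,\alpha_{21}X_1+\alpha_{22}X_2)$ has the same law as $(X_1,X_2)$. *)

theory Defs
  imports "HOL-Probability.Probability"
begin

text \<open>Total disconnectedness follows from the
  ultrametric inequality.\<close>
definition local_field_abs :: "('k::{field,metric_space} \<Rightarrow> real) \<Rightarrow> bool" where
  "local_field_abs av \<longleftrightarrow>
     (\<forall>x. av x = 0 \<longleftrightarrow> x = 0) \<and>
     (\<forall>x y. av (x * y) = av x * av y) \<and>
     (\<forall>x y. av (x + y) \<le> max (av x) (av y)) \<and>
     (\<forall>x y. dist x y = av (x - y)) \<and>
     (\<exists>x. x \<noteq> 0 \<and> av x \<noteq> 1) \<and>
     locally_compact_space (euclidean :: 'k topology)"

definition norm2 :: "('k \<Rightarrow> real) \<Rightarrow> 'k \<times> 'k \<Rightarrow> real" where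
  "norm2 av v = max (av (fst v)) (av (snd v))"

definition orthonormal_pair :: "('k::field \<Rightarrow> real) \<Rightarrow> 'k \<times> 'k \<Rightarrow> 'k \<times> 'k \<Rightarrow> bool" where
  "orthonormal_pair av u v \<longleftrightarrow>
     norm2 av u = 1 \<and> norm2 av v = 1 \<and>
     (\<forall>b1 b2. norm2 av (b1 * fst u + b2 * fst v, b1 * snd u + b2 * snd v)
               = max (av b1 * norm2 av u) (av b2 * norm2 av v))"

text \<open>If X1, X2 are independent copies of X
  with law mu, the law of (X1, X2) is mu \<otimes> mu, so the condition is stated on laws.\<close>
definition K_gaussian ::
  "('k::field \<Rightarrow> real) \<Rightarrow> ('k \<Rightarrow> 'e \<Rightarrow> 'e) \<Rightarrow> ('e \<Rightarrow> 'e \<Rightarrow> 'e) \<Rightarrow> 'e measure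
    \<Rightarrow> 'a measure \<Rightarrow> ('a \<Rightarrow> 'e) \<Rightarrow> bool" where
  "K_gaussian av scl add E M X \<longleftrightarrow>
     X \<in> measurable M E \<and>
     (\<forall>a11 a12 a21 a22. orthonormal_pair av (a11, a12) (a21, a22) \<longrightarrow>
        (let \<mu> = distr M E X in
          distr (\<mu> \<Otimes>\<^sub>M \<mu>) (E \<Otimes>\<^sub>M E)
            (\<lambda>(x1, x2). (add (scl a11 x1) (scl a12 x2), add (scl a21 x1) (scl a22 x2)))
          = \<mu> \<Otimes>\<^sub>M \<mu>))"

definition K_gaussian_scalar :: "('k::{field,metric_space} \<Rightarrow> real) \<Rightarrow> 'a measure \<Rightarrow> ('a \<Rightarrow> 'k) \<Rightarrow> bool" where
  "K_gaussian_scalar av M X \<longleftrightarrow> K_gaussian av (\<lambda>a x. a * x) (+) borel M X"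

definition K_gaussian_vec :: "('k::{field,metric_space} \<Rightarrow> real) \<Rightarrow> nat \<Rightarrow> 'a measure \<Rightarrow> ('a \<Rightarrow> (nat \<Rightarrow> 'k)) \<Rightarrow> bool" where
  "K_gaussian_vec av n M Y \<longleftrightarrow>
     K_gaussian av (\<lambda>a y. \<lambda>i\<in>{..<n}. a * y i) (\<lambda>y z. \<lambda>i\<in>{..<n}. y i + z i)
       (PiM {..<n} (\<lambda>_. borel)) M Y"

definition Linf_norm :: "('k \<Rightarrow> real) \<Rightarrow> 'a measure \<Rightarrow> ('a \<Rightarrow> 'k) \<Rightarrow> ereal" where
  "Linf_norm av M f = esssup M (\<lambda>\<omega>. ereal (av (f \<omega>)))"

definition Linf_orthogonal :: "('k::{field,metric_space} \<Rightarrow> real) \<Rightarrow> 'a measure \<Rightarrow> ('i \<Rightarrow> 'a \<Rightarrow> 'k) \<Rightarrow> 'i set \<Rightarrow> bool" where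
  "Linf_orthogonal av M X I \<longleftrightarrow>
     (\<forall>i\<in>I. X i \<in> borel_measurable M \<and> Linf_norm av M (X i) < \<infinity>) \<and>
     (\<forall>\<alpha>. Linf_norm av M (\<lambda>\<omega>. \<Sum>i\<in>I. \<alpha> i * X i \<omega>)
            = Max (insert 0 ((\<lambda>i. ereal (av (\<alpha> i)) * Linf_norm av M (X i)) ` I)))"

end

theory Submission
  imports Defs
begin

text \<open>Let \<open>\<mu>\<close> be the law of a \<open>K\<close>-Gaussian vector; all that is used is that \<open>\<mu>\<close> is the law of
  \<open>x + a y\<close> for independent \<open>x, y\<close> with law \<open>\<mu>\<close> and \<open>|a| \<le> 1\<close>. The coordinates are then bounded,
  say by \<open>r\<^sub>i = \<parallel>X\<^sub>i\<parallel>\<^sub>\<infinity>\<close>, which lie in the value group. Among small polydiscs those of maximal mass are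
  exactly those of positive mass, and their centres form a module over the valuation ring; if the
  coordinates are (weakly) orthogonal, this module contains the box \<open>|t\<^sub>i| \<le> r\<^sub>i\<close>, so \<open>\<mu>\<close> is
  invariant under translation by the box. This applies in particular to each one-dimensional
  marginal, where orthogonality is automatic.

  If the \<open>X\<^sub>i\<close> are orthogonal, \<open>\<mu>\<close> and the product of its marginals are both concentrated on
  the box and invariant under its translations, hence equal (compute the law of \<open>x + z\<close> under
  their product in two ways): the \<open>X\<^sub>i\<close> are independent. Conversely, if they are independent, \<open>\<mu>\<close>
  is invariant under the translation by \<open>y e\<^sub>j\<close> with \<open>|y| = r\<^sub>j\<close>, which forces
  \<open>\<parallel>\<Sum> \<alpha>\<^sub>i X\<^sub>i\<parallel>\<^sub>\<infinity> \<ge> |\<alpha>\<^sub>j| r\<^sub>j\<close>. Part (ii) is a coordinatewise computation on the product of the laws.\<close>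

section \<open>Local fields\<close>

locale nonarch_field =
  fixes av :: "'k::{field,metric_space} \<Rightarrow> real"
  assumes local_field: "local_field_abs av"
begin

lemma av_eq_0_iff [simp]: "av x = 0 \<longleftrightarrow> x = 0"
  using local_field unfolding local_field_abs_def by blast

lemma av_mult: "av (x * y) = av x * av y"
  using local_field unfolding local_field_abs_def by blast

lemma av_add_le_max: "av (x + y) \<le> max (av x) (av y)"
  using local_field unfolding local_field_abs_def by blast

lemma dist_eq_av: "dist x y = av (x - y)"
  using local_field unfolding local_field_abs_def by blast

lemma av_nonneg [simp]: "0 \<le> av x"
  using dist_eq_av[of x 0] by (metis diff_zero zero_le_dist)

lemma av_0 [simp]: "av 0 = 0"
  by simp

lemma av_pos_iff [simp]: "0 < av x \<longleftrightarrow> x \<noteq> 0"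
  using av_nonneg[of x] av_eq_0_iff[of x] by linarith

lemma av_le_0_iff [simp]: "av x \<le> 0 \<longleftrightarrow> x = 0"
  using av_pos_iff[of x] by linarith

lemma av_one [simp]: "av 1 = 1"
proof -
  have "av 1 * av 1 = av 1 * 1" using av_mult[of 1 1] by simp
  then show ?thesis by (subst (asm) mult_left_cancel) simp_all
qed

lemma av_minus [simp]: "av (- x) = av x"
proof -
  have "av (-1) * av (-1) = 1" using av_mult[of "-1" "-1"] by simp
  then have "av (-1) = 1"
    by (metis av_nonneg abs_of_nonneg power2_eq_square real_sqrt_abs real_sqrt_one)
  then show ?thesis using av_mult[of "-1" x] by simp
qed

lemma av_minus_commute: "av (x - y) = av (y - x)"
  by (metis av_minus minus_diff_eq)

lemma av_diff_le_max: "av (x - y) \<le> max (av x) (av y)"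
  using av_add_le_max[of x "-y"] by simp

lemma av_add_eq_right:
  assumes "av x < av y"
  shows "av (x + y) = av y"
proof -
  have "av (x + y) \<le> av y" using av_add_le_max[of x y] assms by simp
  moreover have "av y \<le> max (av (x + y)) (av x)"
    using av_diff_le_max[of "x + y" x] by simp
  ultimately show ?thesis using assms by linarith
qed

lemma av_inverse: "av (inverse x) = inverse (av x)"
proof (cases "x = 0")
  case False
  then have "av x * av (inverse x) = 1" using av_mult[of x "inverse x"] by simp
  then show ?thesis using False by (simp add: inverse_eq_divide eq_divide_eq mult.commute)
qed simp

lemma av_divide: "av (x / y) = av x / av y"
  by (simp add: divide_inverse av_mult av_inverse)

lemma av_power: "av (x ^ n) = av x ^ n"
  by (induction n) (simp_all add: av_mult)

lemma av_sum_le: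
  assumes "finite F" "\<And>i. i \<in> F \<Longrightarrow> av (f i) \<le> c" "0 \<le> c"
  shows "av (\<Sum>i\<in>F. f i) \<le> c"
  using assms
proof (induction F rule: finite_induct)
  case (insert x F)
  then have "av (f x) \<le> c" "av (sum f F) \<le> c" by auto
  then show ?case using av_add_le_max[of "f x" "sum f F"] insert(1,2) by simp
qed simp

lemma ball_subset_ball_av:
  assumes "av (x - d) < r" "r \<le> e"
  shows "ball d r \<subseteq> ball x e"
proof
  fix y assume "y \<in> ball d r"
  then have "av (d - y) < r" by (simp add: dist_eq_av)
  have "av (x - y) \<le> max (av (x - d)) (av (d - y))"
    using av_add_le_max[of "x - d" "d - y"] by simp
  also have "\<dots> < e" using assms \<open>av (d - y) < r\<close> by simp
  finally show "y \<in> ball x e" by (simp add: dist_eq_av)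
qed

lemma exists_av_between_0_1: "\<exists>p. 0 < av p \<and> av p < 1"
proof -
  obtain x where x: "x \<noteq> 0" "av x \<noteq> 1" using local_field unfolding local_field_abs_def by blast
  show ?thesis
  proof (cases "av x < 1")
    case False
    then have "av x > 1" using x by simp
    then show ?thesis using x by (intro exI[of _ "inverse x"]) (simp add: av_inverse inverse_less_1_iff)
  qed (use x in auto)
qed

definition small_elt :: 'k where "small_elt = (SOME p. 0 < av p \<and> av p < 1)"

lemma small_elt: "0 < av small_elt" "av small_elt < 1"
  using someI_ex[OF exists_av_between_0_1] unfolding small_elt_def by auto

lemma small_elt_power_less: "0 < e \<Longrightarrow> \<exists>k. av (small_elt ^ k) < e"
  using real_arch_pow_inv[OF _ small_elt(2)] by (simp add: av_power)

lemma ball_subset_compact: "\<exists>\<delta> C. 0 < \<delta> \<and> compact C \<and> ball (0::'k) \<delta> \<subseteq> C"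
proof -
  have "locally_compact_space (euclidean :: 'k topology)"
    using local_field unfolding local_field_abs_def by blast
  then have "\<exists>U C. open U \<and> compact C \<and> (0::'k) \<in> U \<and> U \<subseteq> C"
    unfolding locally_compact_space_def by simp
  then obtain U C where "open U" "compact C" "(0::'k) \<in> U" "U \<subseteq> C" by blast
  then obtain e where "e > 0" "ball 0 e \<subseteq> U" using open_contains_ball by blast
  then show ?thesis using \<open>compact C\<close> \<open>U \<subseteq> C\<close> by blast
qed

lemma compact_finite_ball_cover:
  assumes "0 < r" "compact C"
  shows "\<exists>T. T \<subseteq> C \<and> finite T \<and> C \<subseteq> (\<Union>y\<in>T. ball y r)"
proof -
  have "C \<subseteq> (\<Union>y\<in>C. ball y r)" using assms by auto
  from compactE_image[OF assms(2) _ this] show ?thesis by (metis open_ball)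
qed

text \<open>Discreteness of the value group: after rescaling into a compact neighbourhood of 0, the
  values in \<open>[a, b]\<close> are read off a finite cover by balls of radius below \<open>a\<close>, on which
  the absolute value is constant.\<close>
lemma finite_av_values_between:
  assumes "0 < a"
  shows "finite {av x | x. a \<le> av x \<and> av x \<le> b}"
proof -
  obtain \<delta> C where C: "0 < \<delta>" "compact C" "ball (0::'k) \<delta> \<subseteq> C" using ball_subset_compact by blast
  obtain k where k: "av (small_elt ^ k) < \<delta> / (\<bar>b\<bar> + 1)"
    using small_elt_power_less[of "\<delta> / (\<bar>b\<bar> + 1)"] C(1) by auto
  define w where "w = small_elt ^ k"
  have wpos: "0 < av w" unfolding w_def using small_elt by (simp add: av_power)
  obtain T where T: "finite T" "C \<subseteq> (\<Union>y\<in>T. ball y (av w * a))"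
    using compact_finite_ball_cover[OF _ C(2), of "av w * a"] wpos assms by auto
  have "av x \<in> (\<lambda>y. av y / av w) ` T" if x: "a \<le> av x" "av x \<le> b" for x
  proof -
    have "av (w * x) \<le> av w * \<bar>b\<bar>" using x wpos by (simp add: av_mult)
    also have "\<dots> < \<delta>" using k wpos unfolding w_def
      by (smt (verit) C(1) divide_pos_pos mult_less_cancel_left_pos mult_nonneg_nonneg
          nonzero_mult_div_cancel_right pos_less_divide_eq)
    finally have "w * x \<in> C" using C(3) by (auto simp: dist_eq_av)
    then obtain y where y: "y \<in> T" "av (y - w * x) < av w * a" using T(2) by (auto simp: dist_eq_av)
    have "av y = av ((y - w * x) + w * x)" by simp
    also have "\<dots> = av (w * x)"
    proof (rule av_add_eq_right)
      have "av w * a \<le> av (w * x)" using x wpos by (simp add: av_mult)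
      then show "av (y - w * x) < av (w * x)" using y(2) by linarith
    qed
    finally have "av x = av y / av w" using wpos by (simp add: av_mult)
    then show ?thesis using y(1) by blast
  qed
  then have "{av x | x. a \<le> av x \<and> av x \<le> b} \<subseteq> (\<lambda>y. av y / av w) ` T" by blast
  then show ?thesis using T(1) finite_subset by blast
qed

text \<open>\<open>theta\<close> is the largest absolute value below 1, i.e.\ the absolute value of a uniformizer.\<close>
definition theta :: real where
  "theta = Max {v \<in> {av x | x. av small_elt \<le> av x \<and> av x \<le> 1}. v < 1}"

lemma theta_pos: "0 < theta" and theta_less_1: "theta < 1"
  and av_less_imp_le_theta: "av z < av w \<Longrightarrow> av z \<le> theta * av w"
proof -
  let ?V = "{v \<in> {av x | x. av small_elt \<le> av x \<and> av x \<le> 1}. v < 1}"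
  have fin: "finite ?V" using finite_av_values_between[OF small_elt(1), of 1] by simp
  have small: "av small_elt \<in> ?V" using small_elt by auto
  have "theta \<in> ?V" unfolding theta_def using Max_in[OF fin] small by blast
  then show "theta < 1" by simp
  have ge: "av small_elt \<le> theta" unfolding theta_def using Max_ge[OF fin small] .
  then show "0 < theta" using small_elt(1) by linarith
  assume zw: "av z < av w"
  then have wpos: "0 < av w" using av_nonneg[of z] by linarith
  have q: "av (z / w) = av z / av w" by (rule av_divide)
  have q1: "av (z / w) < 1" using zw wpos by (simp add: q)
  have "av (z / w) \<le> theta"
  proof (cases "av small_elt \<le> av (z / w)")
    case True
    then have "av (z / w) \<in> ?V" using q1 by auto
    then show ?thesis unfolding theta_def using Max_ge[OF fin] by blast
  qed (use ge in linarith)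
  then show "av z \<le> theta * av w" using q wpos by (simp add: field_simps)
qed

lemma exists_countable_dense: "\<exists>D. countable D \<and> (\<forall>x e. 0 < e \<longrightarrow> (\<exists>d\<in>D. av (x - d) < e))"
proof -
  obtain \<delta> C where C: "0 < \<delta>" "compact C" "ball (0::'k) \<delta> \<subseteq> C" using ball_subset_compact by blast
  have "\<forall>m::nat. \<exists>T. T \<subseteq> C \<and> finite T \<and> C \<subseteq> (\<Union>y\<in>T. ball y (1 / Suc m))"
    using C(2) by (intro allI compact_finite_ball_cover) simp_all
  then obtain T where T: "\<And>m::nat. finite (T m) \<and> C \<subseteq> (\<Union>y\<in>T m. ball y (1 / Suc m))"
    by metis
  define D where "D = (\<lambda>(d, k::nat). d / small_elt ^ k) ` ((\<Union>m. T m) \<times> UNIV)"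
  have "countable D" unfolding D_def
    using T by (intro countable_image countable_SIGMA countable_UN) (auto intro: countable_finite)
  moreover have "\<exists>d\<in>D. av (x - d) < e" if e: "0 < e" for x e
  proof -
    obtain k where k: "av (small_elt ^ k) < \<delta> / (av x + 1)"
      using small_elt_power_less[of "\<delta> / (av x + 1)"] C(1) by (smt (verit) av_nonneg divide_pos_pos)
    define w where "w = small_elt ^ k"
    have wpos: "0 < av w" unfolding w_def using small_elt by (simp add: av_power)
    have "av (x * w) \<le> (av x + 1) * av w" using wpos by (simp add: av_mult distrib_right)
    also have "\<dots> < \<delta>" using k unfolding w_def by (smt (verit) av_nonneg mult.commute pos_less_divide_eq)
    finally have "x * w \<in> C" using C(3) by (auto simp: dist_eq_av)
    obtain m :: nat where m: "1 / Suc m < e * av w"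
      using wpos e by (metis mult_pos_pos nat_approx_posE)
    obtain y where y: "y \<in> T m" "av (y - x * w) < 1 / Suc m"
      using T[of m] \<open>x * w \<in> C\<close> by (auto simp: dist_eq_av)
    have "y / w \<in> D" unfolding D_def w_def using y(1) by force
    have "x - y / w = (x * w - y) / w" using wpos by (simp add: field_simps)
    then have "av (x - y / w) = av (y - x * w) / av w" by (simp add: av_divide av_minus_commute)
    also have "\<dots> < e"
    proof -
      have "av (y - x * w) < e * av w" using y(2) m by linarith
      then show ?thesis using wpos by (simp add: pos_divide_less_eq)
    qed
    finally show ?thesis using \<open>y / w \<in> D\<close> by blast
  qed
  ultimately show ?thesis by blast
qed

definition dense_set :: "'k set" where
  "dense_set = (SOME D. countable D \<and> (\<forall>x e. 0 < e \<longrightarrow> (\<exists>d\<in>D. av (x - d) < e)))"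

lemma countable_dense_set: "countable dense_set"
  and dense_set_approx: "0 < e \<Longrightarrow> \<exists>d\<in>dense_set. av (x - d) < e"
  using someI_ex[OF exists_countable_dense] unfolding dense_set_def by blast+

section \<open>Borel measurability of the field operations\<close>

definition dense_balls :: "'k set set" where
  "dense_balls = (\<lambda>(d, m::nat). ball d (1 / Suc m)) ` (dense_set \<times> UNIV)"

lemma topological_basis_dense_balls: "topological_basis dense_balls"
proof (subst topological_basis_iff)
  show "open B" if "B \<in> dense_balls" for B using that unfolding dense_balls_def by auto
  show "\<forall>U. open U \<longrightarrow> (\<forall>x\<in>U. \<exists>B\<in>dense_balls. x \<in> B \<and> B \<subseteq> U)"
  proof (intro allI impI ballI)
    fix U :: "'k set" and x :: 'k assume "open U" "x \<in> U"
    then obtain e where e: "e > 0" "ball x e \<subseteq> U" using open_contains_ball by blast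
    obtain m :: nat where m: "1 / Suc m < e" using e nat_approx_posE by blast
    obtain d where d: "d \<in> dense_set" "av (x - d) < 1 / Suc m" using dense_set_approx[of "1 / Suc m" x] by auto
    have "x \<in> ball d (1 / Suc m)" using d by (simp add: dist_eq_av av_minus_commute)
    moreover have "ball d (1 / Suc m) \<subseteq> U" using ball_subset_ball_av[OF d(2), of e] m e by auto
    moreover have "ball d (1 / Suc m) \<in> dense_balls" unfolding dense_balls_def using d by auto
    ultimately show "\<exists>B\<in>dense_balls. x \<in> B \<and> B \<subseteq> U" by blast
  qed
qed

lemma borel_eq_dense_balls: "(borel :: 'k measure) = sigma UNIV dense_balls"
  by (rule borel_eq_countable_basis[OF _ topological_basis_dense_balls])
     (simp add: dense_balls_def countable_dense_set)

text \<open>\<open>'k\<close> carries no topological-ring instance, so measurability of addition is proved by hand: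
  the preimage of a ball splits along the countable dense set.\<close>
lemma measurable_add_K [measurable (raw)]:
  fixes f g :: "'a \<Rightarrow> 'k"
  assumes f: "f \<in> borel_measurable N" and g: "g \<in> borel_measurable N"
  shows "(\<lambda>x. f x + g x) \<in> borel_measurable N"
proof -
  have "(\<lambda>x. f x + g x) \<in> measurable N (sigma UNIV dense_balls)"
  proof (rule measurable_measure_of)
    fix B assume "B \<in> dense_balls"
    then obtain c r where B: "B = ball c r" unfolding dense_balls_def by auto
    have "(\<lambda>x. f x + g x) -` B \<inter> space N =
      (\<Union>d\<in>dense_set. (f -` ball d r \<inter> space N) \<inter> (g -` ball (c - d) r \<inter> space N))"
    proof (intro set_eqI iffI)
      fix x assume x: "x \<in> (\<lambda>x. f x + g x) -` B \<inter> space N"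
      then have r: "av (c - (f x + g x)) < r" by (simp add: B dist_eq_av)
      then have "0 < r" by (metis av_nonneg le_less_trans)
      then obtain d where d: "d \<in> dense_set" "av (f x - d) < r" using dense_set_approx by blast
      have "av ((c - d) - g x) \<le> max (av (c - (f x + g x))) (av (f x - d))"
        using av_add_le_max[of "c - (f x + g x)" "f x - d"] by (simp add: algebra_simps)
      then show "x \<in> (\<Union>d\<in>dense_set. (f -` ball d r \<inter> space N) \<inter> (g -` ball (c - d) r \<inter> space N))"
        using x d r by (auto simp: dist_eq_av av_minus_commute)
    next
      fix x assume "x \<in> (\<Union>d\<in>dense_set. (f -` ball d r \<inter> space N) \<inter> (g -` ball (c - d) r \<inter> space N))"
      then obtain d where d: "av (d - f x) < r" "av (c - d - g x) < r" "x \<in> space N"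
        by (auto simp: dist_eq_av)
      have "av (c - (f x + g x)) \<le> max (av (c - d - g x)) (av (d - f x))"
        using av_add_le_max[of "c - d - g x" "d - f x"] by (simp add: algebra_simps)
      then show "x \<in> (\<lambda>x. f x + g x) -` B \<inter> space N" using d by (simp add: B dist_eq_av)
    qed
    also have "\<dots> \<in> sets N"
      using f g countable_dense_set
      by (intro sets.countable_UN'' Int) (auto intro: measurable_sets[OF _ borel_open])
    finally show "(\<lambda>x. f x + g x) -` B \<inter> space N \<in> sets N" .
  qed (auto simp: dense_balls_def)
  then show ?thesis by (simp add: borel_eq_dense_balls)
qed

lemma continuous_on_cmult_K: "continuous_on UNIV (\<lambda>y::'k. c * y)"
  unfolding continuous_on_iff
proof (intro ballI allI impI)
  fix x :: 'k and e :: real assume "0 < e"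
  show "\<exists>d>0. \<forall>x'\<in>UNIV. dist x' x < d \<longrightarrow> dist (c * x') (c * x) < e"
  proof (intro exI[of _ "e / (av c + 1)"] conjI ballI impI)
    show "0 < e / (av c + 1)" using \<open>0 < e\<close> by (simp add: add_nonneg_pos)
    fix x' :: 'k assume "dist x' x < e / (av c + 1)"
    then have h: "av (x' - x) * (av c + 1) < e" by (simp add: dist_eq_av pos_less_divide_eq add_nonneg_pos)
    have "dist (c * x') (c * x) = av c * av (x' - x)" by (simp add: dist_eq_av av_mult[symmetric] algebra_simps)
    also have "\<dots> \<le> av (x' - x) * (av c + 1)" by (simp add: algebra_simps)
    finally show "dist (c * x') (c * x) < e" using h by linarith
  qed
qed

lemma measurable_cmult_K [measurable (raw)]:
  fixes f :: "'a \<Rightarrow> 'k"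
  assumes "f \<in> borel_measurable N"
  shows "(\<lambda>x. c * f x) \<in> borel_measurable N"
  using measurable_compose[OF assms borel_measurable_continuous_onI[OF continuous_on_cmult_K[of c]]]
  by (simp add: o_def)

lemma measurable_av [measurable (raw)]:
  fixes f :: "'a \<Rightarrow> 'k"
  assumes "f \<in> borel_measurable N"
  shows "(\<lambda>x. av (f x)) \<in> borel_measurable N"
proof -
  have "continuous_on UNIV (\<lambda>y::'k. dist y 0)" by (intro continuous_intros)
  moreover have "(\<lambda>y::'k. dist y 0) = av" by (simp add: dist_eq_av fun_eq_iff)
  ultimately have "continuous_on UNIV av" by metis
  from measurable_compose[OF assms borel_measurable_continuous_onI[OF this]] show ?thesis
    by (simp add: o_def)
qed

lemma measurable_sum_K [measurable (raw)]:
  fixes f :: "'i \<Rightarrow> 'a \<Rightarrow> 'k"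
  assumes "\<And>i. i \<in> F \<Longrightarrow> f i \<in> borel_measurable N"
  shows "(\<lambda>x. \<Sum>i\<in>F. f i x) \<in> borel_measurable N"
proof (cases "finite F")
  case True
  then show ?thesis using assms
    by (induction F rule: finite_induct) (auto intro!: measurable_add_K)
qed simp


end

section \<open>Gaussian laws on \<open>K\<^sup>N\<close>\<close>

context nonarch_field
begin

lemma orthonormal_pair_shear:
  assumes "av a \<le> 1"
  shows "orthonormal_pair av (1, a) (0, 1)"
  unfolding orthonormal_pair_def norm2_def
proof (intro conjI allI)
  fix b1 b2 :: 'k
  have le: "av (b1 * a) \<le> av b1" using assms by (simp add: av_mult mult_left_le)
  have "max (av b1) (av (b1 * a + b2)) = max (av b1) (av b2)"
  proof (cases "av b1 < av b2")
    case True
    then have "av (b1 * a + b2) = av b2" using le by (intro av_add_eq_right) simp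
    then show ?thesis by simp
  next
    case False
    then have "av (b1 * a + b2) \<le> av b1" using le av_add_le_max[of "b1 * a" b2] by simp
    then show ?thesis using False by simp
  qed
  then show "max (av (fst (b1 * fst (1, a) + b2 * fst (0, 1), b1 * snd (1, a) + b2 * snd (0, 1))))
      (av (snd (b1 * fst (1, a) + b2 * fst (0, 1), b1 * snd (1, a) + b2 * snd (0, 1)))) =
     max (av b1 * max (av (fst (1, a))) (av (snd (1, a))))
      (av b2 * max (av (fst (0::'k, 1::'k))) (av (snd (0::'k, 1::'k))))"
    using assms by (simp add: max_absorb1)
qed (use assms in auto)

end

text \<open>Of the \<open>K\<close>-Gaussian property only the orthonormal pairs \<open>(1, a), (0, 1)\<close> with \<open>|a| \<le> 1\<close> are
  used: the law \<open>\<mu>\<close> is reproduced by \<open>x + a y\<close> for independent \<open>x, y\<close> distributed by \<open>\<mu>\<close>.\<close>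
locale gaussian_law = nonarch_field av for av :: "'k::{field,metric_space} \<Rightarrow> real" +
  fixes N :: "nat set" and \<mu> :: "(nat \<Rightarrow> 'k) measure"
  assumes finite_N: "finite N"
    and prob_space_law: "prob_space \<mu>"
    and sets_law: "sets \<mu> = sets (PiM N (\<lambda>_. borel :: 'k measure))"
    and shear_invariant: "av a \<le> 1 \<Longrightarrow>
      distr (\<mu> \<Otimes>\<^sub>M \<mu>) (PiM N (\<lambda>_. borel)) (\<lambda>p. \<lambda>i\<in>N. fst p i + a * snd p i) = \<mu>"

lemma (in nonarch_field) K_gaussian_vec_imp_gaussian_law:
  assumes M: "prob_space M" and G: "K_gaussian_vec av n M Y"
  shows "gaussian_law av {..<n} (distr M (PiM {..<n} (\<lambda>_. borel :: 'k measure)) Y)"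
proof -
  let ?E = "PiM {..<n} (\<lambda>_. borel :: 'k measure)"
  let ?\<mu> = "distr M ?E Y"
  have Y: "Y \<in> measurable M ?E" using G unfolding K_gaussian_vec_def K_gaussian_def by auto
  interpret law: prob_space ?\<mu> using M Y by (simp add: prob_space.prob_space_distr)
  interpret pair: pair_prob_space ?\<mu> ?\<mu> by standard
  have sets_pair: "sets (?\<mu> \<Otimes>\<^sub>M ?\<mu>) = sets (?E \<Otimes>\<^sub>M ?E)"
    by (intro sets_pair_measure_cong) simp_all
  show ?thesis
  proof unfold_locales
    fix a :: 'k assume a: "av a \<le> 1"
    let ?F = "\<lambda>(x1, x2). ((\<lambda>i\<in>{..<n}. (\<lambda>i\<in>{..<n}. 1 * x1 i) i + (\<lambda>i\<in>{..<n}. a * x2 i) i),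
                     (\<lambda>i\<in>{..<n}. (\<lambda>i\<in>{..<n}. 0 * x1 i) i + (\<lambda>i\<in>{..<n}. 1 * x2 i) i))"
    have F: "distr (?\<mu> \<Otimes>\<^sub>M ?\<mu>) (?E \<Otimes>\<^sub>M ?E) ?F = ?\<mu> \<Otimes>\<^sub>M ?\<mu>"
      using G orthonormal_pair_shear[OF a] unfolding K_gaussian_vec_def K_gaussian_def Let_def by blast
    have "?F \<in> measurable (?E \<Otimes>\<^sub>M ?E) (?E \<Otimes>\<^sub>M ?E)"
      by (simp add: case_prod_beta')
    then have F_meas: "?F \<in> measurable (?\<mu> \<Otimes>\<^sub>M ?\<mu>) (?E \<Otimes>\<^sub>M ?E)"
      by (simp add: measurable_cong_sets[OF sets_pair refl])
    have "distr (?\<mu> \<Otimes>\<^sub>M ?\<mu>) ?E (\<lambda>p. \<lambda>i\<in>{..<n}. fst p i + a * snd p i) = distr (?\<mu> \<Otimes>\<^sub>M ?\<mu>) ?E (fst \<circ> ?F)"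
      by (intro distr_cong) (auto simp: fun_eq_iff)
    also have "\<dots> = distr (distr (?\<mu> \<Otimes>\<^sub>M ?\<mu>) (?E \<Otimes>\<^sub>M ?E) ?F) ?E fst"
      by (rule distr_distr[symmetric, OF measurable_fst F_meas])
    also have "\<dots> = distr (?\<mu> \<Otimes>\<^sub>M ?\<mu>) ?\<mu> fst"
      unfolding F by (intro distr_cong) simp_all
    also have "\<dots> = ?\<mu>" by (rule law.distr_pair_fst)
    finally show "distr (?\<mu> \<Otimes>\<^sub>M ?\<mu>) ?E (\<lambda>p. \<lambda>i\<in>{..<n}. fst p i + a * snd p i) = ?\<mu>" .
  qed (simp_all add: law.prob_space_axioms)
qed

sublocale gaussian_law \<subseteq> law: prob_space \<mu>
  by (rule prob_space_law)

sublocale gaussian_law \<subseteq> law_pair: pair_prob_space \<mu> \<mu>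
  by unfold_locales

context gaussian_law
begin

lemma space_law: "space \<mu> = PiE N (\<lambda>_. UNIV)"
  using sets_eq_imp_space_eq[OF sets_law] by (simp add: space_PiM)

lemma sets_law_pair: "sets (\<mu> \<Otimes>\<^sub>M \<mu>) = sets (PiM N (\<lambda>_. borel :: 'k measure) \<Otimes>\<^sub>M PiM N (\<lambda>_. borel))"
  by (intro sets_pair_measure_cong sets_law)

lemma measure_law_pair_Times:
  "A \<in> sets \<mu> \<Longrightarrow> B \<in> sets \<mu> \<Longrightarrow> measure (\<mu> \<Otimes>\<^sub>M \<mu>) (A \<times> B) = measure \<mu> A * measure \<mu> B"
  by (simp add: measure_def law.emeasure_pair_measure_Times enn2real_mult)

lemma measurable_shear:
  "(\<lambda>p. \<lambda>i\<in>N. fst p i + a * snd p i) \<in> measurable (\<mu> \<Otimes>\<^sub>M \<mu>) (PiM N (\<lambda>_. borel :: 'k measure))"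
  by (simp add: measurable_cong_sets[OF sets_law_pair refl])

lemma sets_shear_preimage:
  "A \<in> sets \<mu> \<Longrightarrow> {p \<in> space (\<mu> \<Otimes>\<^sub>M \<mu>). (\<lambda>i\<in>N. fst p i + a * snd p i) \<in> A} \<in> sets (\<mu> \<Otimes>\<^sub>M \<mu>)"
  using measurable_sets[OF measurable_shear, of A a] sets_law by (simp add: Int_def conj_commute vimage_def)

lemma emeasure_shear:
  assumes "av a \<le> 1" "A \<in> sets \<mu>"
  shows "emeasure \<mu> A = emeasure (\<mu> \<Otimes>\<^sub>M \<mu>) {p \<in> space (\<mu> \<Otimes>\<^sub>M \<mu>). (\<lambda>i\<in>N. fst p i + a * snd p i) \<in> A}"
proof -
  have "emeasure \<mu> A = emeasure (distr (\<mu> \<Otimes>\<^sub>M \<mu>) (PiM N (\<lambda>_. borel)) (\<lambda>p. \<lambda>i\<in>N. fst p i + a * snd p i)) A"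
    by (simp only: shear_invariant[OF assms(1)])
  also have "\<dots> = emeasure (\<mu> \<Otimes>\<^sub>M \<mu>) ((\<lambda>p. \<lambda>i\<in>N. fst p i + a * snd p i) -` A \<inter> space (\<mu> \<Otimes>\<^sub>M \<mu>))"
    using assms(2) sets_law by (intro emeasure_distr measurable_shear) simp
  finally show ?thesis by (simp add: Int_def conj_commute vimage_def)
qed

lemma measure_shear:
  "av a \<le> 1 \<Longrightarrow> A \<in> sets \<mu> \<Longrightarrow>
    measure \<mu> A = measure (\<mu> \<Otimes>\<^sub>M \<mu>) {p \<in> space (\<mu> \<Otimes>\<^sub>M \<mu>). (\<lambda>i\<in>N. fst p i + a * snd p i) \<in> A}"
  by (simp add: measure_def emeasure_shear)

lemma measurable_coord: "i \<in> N \<Longrightarrow> (\<lambda>x. x i) \<in> borel_measurable \<mu>"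
  by (simp add: measurable_cong_sets[OF sets_law refl])

lemma gaussian_law_restrict:
  assumes J: "J \<subseteq> N"
  shows "gaussian_law av J (distr \<mu> (PiM J (\<lambda>_. borel :: 'k measure)) (\<lambda>x. restrict x J))"
proof -
  let ?EJ = "PiM J (\<lambda>_. borel :: 'k measure)"
  let ?R = "\<lambda>x. restrict x J"
  let ?\<nu> = "distr \<mu> ?EJ ?R"
  have R: "?R \<in> measurable \<mu> ?EJ"
    using measurable_restrict_subset[OF J] by (simp add: measurable_cong_sets[OF sets_law refl])
  interpret marginal: prob_space ?\<nu> by (rule law.prob_space_distr[OF R])
  have R_pair: "(\<lambda>(x, y). (?R x, ?R y)) \<in> measurable (\<mu> \<Otimes>\<^sub>M \<mu>) (?EJ \<Otimes>\<^sub>M ?EJ)"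
    using R by measurable
  show ?thesis
  proof unfold_locales
    show "finite J" using J finite_N by (rule finite_subset)
    fix a :: 'k assume a: "av a \<le> 1"
    have "distr (?\<nu> \<Otimes>\<^sub>M ?\<nu>) ?EJ (\<lambda>p. \<lambda>i\<in>J. fst p i + a * snd p i)
        = distr (distr (\<mu> \<Otimes>\<^sub>M \<mu>) (?EJ \<Otimes>\<^sub>M ?EJ) (\<lambda>(x, y). (?R x, ?R y))) ?EJ (\<lambda>p. \<lambda>i\<in>J. fst p i + a * snd p i)"
      by (simp only: pair_measure_distr[OF R R marginal.sigma_finite_measure_axioms])
    also have "\<dots> = distr (\<mu> \<Otimes>\<^sub>M \<mu>) ?EJ ((\<lambda>p. \<lambda>i\<in>J. fst p i + a * snd p i) \<circ> (\<lambda>(x, y). (?R x, ?R y)))"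
      by (intro distr_distr R_pair) measurable
    also have "\<dots> = distr (\<mu> \<Otimes>\<^sub>M \<mu>) ?EJ (?R \<circ> (\<lambda>p. \<lambda>i\<in>N. fst p i + a * snd p i))"
      using J by (intro distr_cong) (auto simp: fun_eq_iff)
    also have "\<dots> = distr (distr (\<mu> \<Otimes>\<^sub>M \<mu>) (PiM N (\<lambda>_. borel)) (\<lambda>p. \<lambda>i\<in>N. fst p i + a * snd p i)) ?EJ ?R"
      by (intro distr_distr[symmetric] measurable_shear measurable_restrict_subset[OF J])
    also have "\<dots> = ?\<nu>"
      unfolding shear_invariant[OF a] ..
    finally show "distr (?\<nu> \<Otimes>\<^sub>M ?\<nu>) ?EJ (\<lambda>p. \<lambda>i\<in>J. fst p i + a * snd p i) = ?\<nu>" .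
  qed (simp_all add: marginal.prob_space_axioms)
qed

text \<open>The event \<open>U = {R \<le> |x\<^sub>i|}\<close> contains \<open>x + y\<close> whenever exactly one of \<open>x\<close>, \<open>y\<close> lies in it, so
  \<open>P(U) \<ge> 2 P(U) (1 - P(U))\<close>.\<close>
lemma tail_measure_eq_0_or_ge_half:
  assumes i: "i \<in> N"
  shows "measure \<mu> {x \<in> space \<mu>. R \<le> av (x i)} = 0 \<or> 1/2 \<le> measure \<mu> {x \<in> space \<mu>. R \<le> av (x i)}"
proof -
  define U where "U = {x \<in> space \<mu>. R \<le> av (x i)}"
  have U: "U \<in> sets \<mu>" unfolding U_def using measurable_coord[OF i] by measurable
  let ?V = "space \<mu> - U"
  have V: "?V \<in> sets \<mu>" using U by auto
  let ?S = "{p \<in> space (\<mu> \<Otimes>\<^sub>M \<mu>). (\<lambda>i\<in>N. fst p i + 1 * snd p i) \<in> U}"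
  have "measure (\<mu> \<Otimes>\<^sub>M \<mu>) (U \<times> ?V \<union> ?V \<times> U) \<le> measure (\<mu> \<Otimes>\<^sub>M \<mu>) ?S"
  proof (intro law_pair.finite_measure_mono subsetI sets_shear_preimage U)
    fix p assume p: "p \<in> U \<times> ?V \<union> ?V \<times> U"
    have "R \<le> av (fst p i + snd p i)"
    proof (cases "p \<in> U \<times> ?V")
      case True
      then have "R \<le> av (fst p i)" "av (snd p i) < R" by (auto simp: U_def)
      then show ?thesis using av_add_eq_right[of "snd p i" "fst p i"] by (simp add: add.commute)
    next
      case False
      then have "R \<le> av (snd p i)" "av (fst p i) < R" using p by (auto simp: U_def)
      then show ?thesis using av_add_eq_right[of "fst p i" "snd p i"] by simp
    qed
    then show "p \<in> ?S" using p i by (auto simp: U_def space_pair_measure space_law)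
  qed
  also have "\<dots> = measure \<mu> U" by (rule measure_shear[OF _ U, symmetric]) simp
  moreover have "measure (\<mu> \<Otimes>\<^sub>M \<mu>) (U \<times> ?V \<union> ?V \<times> U) = 2 * measure \<mu> U * (1 - measure \<mu> U)"
    using U V by (subst law_pair.finite_measure_Union) (auto simp: measure_law_pair_Times law.prob_compl)
  ultimately have "2 * measure \<mu> U * (1 - measure \<mu> U) \<le> measure \<mu> U" by simp
  then have "measure \<mu> U = 0 \<or> 1/2 \<le> measure \<mu> U"
    using measure_nonneg[of \<mu> U] by (cases "measure \<mu> U = 0") (simp_all add: algebra_simps)
  then show ?thesis by (simp only: U_def)
qed

text \<open>The tails \<open>P(|x\<^sub>i| \<ge> k)\<close> tend to 0, so by the dichotomy one of them vanishes.\<close>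
lemma AE_coord_bounded:
  assumes i: "i \<in> N"
  shows "\<exists>R. AE x in \<mu>. av (x i) < R"
proof -
  define U where "U R = {x \<in> space \<mu>. R \<le> av (x i)}" for R :: real
  have U: "U R \<in> sets \<mu>" for R
    unfolding U_def using measurable_coord[OF i] by measurable
  have "(\<lambda>k. measure \<mu> (U (real k))) \<longlonglongrightarrow> measure \<mu> (\<Inter>k. U (real k))"
    using U by (intro law.finite_Lim_measure_decseq) (auto simp: decseq_def U_def)
  moreover have "(\<Inter>k. U (real k)) = {}"
  proof -
    have "\<not> (\<forall>k::nat. real k \<le> av (x i))" for x
      using reals_Archimedean2[of "av (x i)"] by (auto simp: not_le)
    then show ?thesis unfolding U_def by auto
  qed
  ultimately have "(\<lambda>k. measure \<mu> (U (real k))) \<longlonglongrightarrow> 0" by simp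
  then have "eventually (\<lambda>k. measure \<mu> (U (real k)) < 1/2) sequentially"
    by (rule order_tendstoD) simp
  then obtain k where "measure \<mu> (U (real k)) < 1/2"
    by (auto simp: eventually_sequentially)
  then have "measure \<mu> (U (real k)) = 0"
    using tail_measure_eq_0_or_ge_half[OF i, of "real k"] unfolding U_def by fastforce
  then have "AE x in \<mu>. x \<notin> U (real k)"
    using U by (intro AE_not_in) (simp add: law.emeasure_eq_measure null_sets_def)
  then have "AE x in \<mu>. av (x i) < real k" by (rule AE_mp) (auto simp: U_def intro!: AE_I2)
  then show ?thesis by blast
qed

end

section \<open>Polydiscs of positive mass\<close>

locale gaussian_polydiscs = gaussian_law av N \<mu> for av :: "'k::{field,metric_space} \<Rightarrow> real" and N \<mu> +
  fixes \<rho> :: "nat \<Rightarrow> real"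
  assumes radius_pos: "\<And>i. i \<in> N \<Longrightarrow> 0 < \<rho> i"
begin

definition polydisc :: "(nat \<Rightarrow> 'k) \<Rightarrow> (nat \<Rightarrow> 'k) set" where
  "polydisc c = {x \<in> PiE N (\<lambda>_. UNIV). \<forall>i\<in>N. av (x i - c i) < \<rho> i}"

definition mass :: "(nat \<Rightarrow> 'k) \<Rightarrow> real" where
  "mass c = measure \<mu> (polydisc c)"

definition vsub :: "(nat \<Rightarrow> 'k) \<Rightarrow> (nat \<Rightarrow> 'k) \<Rightarrow> (nat \<Rightarrow> 'k)" where
  "vsub c d = (\<lambda>i\<in>N. c i - d i)"
definition vadd_scaled :: "(nat \<Rightarrow> 'k) \<Rightarrow> 'k \<Rightarrow> (nat \<Rightarrow> 'k) \<Rightarrow> (nat \<Rightarrow> 'k)" where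
  "vadd_scaled c a d = (\<lambda>i\<in>N. c i + a * d i)"
definition pos_centers :: "(nat \<Rightarrow> 'k) set" where
  "pos_centers = {c \<in> PiE N (\<lambda>_. UNIV). 0 < mass c}"
definition vzero :: "nat \<Rightarrow> 'k" where "vzero = (\<lambda>i\<in>N. 0)"

lemma vsub_PiE[simp]: "vsub c d \<in> PiE N (\<lambda>_. UNIV)" unfolding vsub_def by auto
lemma vadd_scaled_PiE[simp]: "vadd_scaled c a d \<in> PiE N (\<lambda>_. UNIV)"
  unfolding vadd_scaled_def by auto
lemma vzero_PiE[simp]: "vzero \<in> PiE N (\<lambda>_. UNIV)" unfolding vzero_def by auto

lemma polydisc_eq_PiE: "polydisc c = PiE N (\<lambda>i. ball (c i) (\<rho> i))"
  unfolding polydisc_def by (auto simp: PiE_iff dist_eq_av av_minus_commute extensional_def)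

lemma sets_polydisc[measurable]: "polydisc c \<in> sets \<mu>"
  unfolding polydisc_eq_PiE sets_law using finite_N by (intro sets_PiM_I_finite) auto

lemma polydisc_subset_space: "polydisc c \<subseteq> space \<mu>"
  unfolding polydisc_def space_law by auto

lemma polydisc_recenter:
  assumes "y \<in> polydisc c"
  shows "polydisc y = polydisc c"
proof -
  have y: "y \<in> PiE N (\<lambda>_. UNIV)" "\<And>i. i \<in> N \<Longrightarrow> av (y i - c i) < \<rho> i" using assms by (auto simp: polydisc_def)
  have "av (x i - c i) < \<rho> i" if "i \<in> N" "av (x i - y i) < \<rho> i" for x i
  proof -
    have le: "av (x i - c i) \<le> max (av (x i - y i)) (av (y i - c i))"
      using av_add_le_max[of "x i - y i" "y i - c i"] by simp
    have "max (av (x i - y i)) (av (y i - c i)) < \<rho> i" using that y(2)[OF that(1)] by simp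
    then show ?thesis using le by linarith
  qed
  moreover have "av (x i - y i) < \<rho> i" if "i \<in> N" "av (x i - c i) < \<rho> i" for x i
  proof -
    have le: "av (x i - y i) \<le> max (av (x i - c i)) (av (y i - c i))"
      using av_diff_le_max[of "x i - c i" "y i - c i"] by simp
    have "max (av (x i - c i)) (av (y i - c i)) < \<rho> i" using that y(2)[OF that(1)] by simp
    then show ?thesis using le by linarith
  qed
  ultimately show ?thesis unfolding polydisc_def by blast
qed

lemma polydisc_eq_if_meet:
  assumes "polydisc c \<inter> polydisc d \<noteq> {}"
  shows "polydisc c = polydisc d"
proof -
  obtain z where "z \<in> polydisc c" "z \<in> polydisc d" using assms by blast
  then show ?thesis using polydisc_recenter by metis
qed

lemma mass_nonneg[simp]: "0 \<le> mass c" unfolding mass_def by simp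

definition dense_centers where "dense_centers = PiE N (\<lambda>_. dense_set)"

lemma countable_dense_centers: "countable dense_centers"
  unfolding dense_centers_def using finite_N countable_dense_set by (intro countable_PiE) auto

lemma polydisc_cover:
  assumes "x \<in> PiE N (\<lambda>_. UNIV)"
  shows "\<exists>d\<in>dense_centers. x \<in> polydisc d"
proof -
  define d where "d = (\<lambda>i\<in>N. SOME d. d \<in> dense_set \<and> av (x i - d) < \<rho> i)"
  have "d i \<in> dense_set \<and> av (x i - d i) < \<rho> i" if "i \<in> N" for i
  proof -
    have "\<exists>d. d \<in> dense_set \<and> av (x i - d) < \<rho> i" using dense_set_approx[OF radius_pos[OF that], of "x i"] by blast
    from someI_ex[OF this] show ?thesis unfolding d_def using that by simp
  qed
  then show ?thesis using assms unfolding dense_centers_def polydisc_def by (intro bexI[of _ d]) (auto simp: d_def)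
qed

lemma exists_pos_mass: "\<exists>c\<in>PiE N (\<lambda>_. UNIV). 0 < mass c"
proof (rule ccontr)
  assume neg: "\<not> (\<exists>c\<in>PiE N (\<lambda>_. UNIV). 0 < mass c)"
  have z: "mass d = 0" if "d \<in> dense_centers" for d
  proof -
    have "d \<in> PiE N (\<lambda>_. UNIV)" using that unfolding dense_centers_def by (auto simp: PiE_iff)
    then have "\<not> 0 < mass d" using neg by blast
    then show ?thesis using mass_nonneg[of d] by linarith
  qed
  have "(\<Union>d\<in>dense_centers. polydisc d) \<in> null_sets \<mu>"
    using countable_dense_centers by (intro null_sets_UN') (auto simp: null_sets_def law.emeasure_eq_measure z[unfolded mass_def])
  moreover have "space \<mu> \<subseteq> (\<Union>d\<in>dense_centers. polydisc d)"
  proof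
    fix x assume "x \<in> space \<mu>"
    then obtain d where "d \<in> dense_centers" "x \<in> polydisc d" using polydisc_cover[of x] space_law by auto
    then show "x \<in> (\<Union>d\<in>dense_centers. polydisc d)" by blast
  qed
  ultimately have "space \<mu> \<in> null_sets \<mu>" by (meson null_sets_subset sets.top)
  then show False by (simp add: law.emeasure_space_1 null_sets_def)
qed

lemma finite_heavy_polydiscs:
  assumes "0 < \<delta>"
  shows "finite {polydisc c | c. c \<in> PiE N (\<lambda>_. UNIV) \<and> \<delta> \<le> mass c}"
proof (rule ccontr)
  let ?B = "{polydisc c | c. c \<in> PiE N (\<lambda>_. UNIV) \<and> \<delta> \<le> mass c}"
  assume "infinite ?B"
  obtain n :: nat where n: "1 < real n * \<delta>"
    using assms by (metis mult.commute reals_Archimedean3)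
  obtain B where B: "finite B" "card B = n" "B \<subseteq> ?B" using infinite_arbitrarily_large[OF \<open>infinite ?B\<close>] by blast
  have Bs: "id ` B \<subseteq> sets \<mu>" using B(3) by auto
  have disj: "disjoint_family_on id B"
    unfolding disjoint_family_on_def
  proof (intro ballI impI)
    fix m n assume mn: "m \<in> B" "n \<in> B" "m \<noteq> n"
    then obtain c d where "m = polydisc c" "n = polydisc d" using B(3) by blast
    then show "id m \<inter> id n = {}" using polydisc_eq_if_meet mn(3) by auto
  qed
  have "measure \<mu> (\<Union>b\<in>B. id b) = (\<Sum>b\<in>B. measure \<mu> (id b))"
    by (rule law.finite_measure_finite_Union[OF B(1) Bs disj])
  also have "\<dots> \<ge> real (card B) * \<delta>"
    using B(3) by (intro sum_bounded_below) (auto simp: mass_def)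
  finally have "1 < measure \<mu> (\<Union>b\<in>B. id b)" using n B(2) by simp
  then show False by (metis law.prob_le_1 not_le)
qed

lemma exists_max_mass: "\<exists>g\<in>PiE N (\<lambda>_. UNIV). 0 < mass g \<and> (\<forall>c\<in>PiE N (\<lambda>_. UNIV). mass c \<le> mass g)"
proof -
  obtain c0 where c0: "c0 \<in> PiE N (\<lambda>_. UNIV)" "0 < mass c0" using exists_pos_mass by blast
  let ?B = "{polydisc c | c. c \<in> PiE N (\<lambda>_. UNIV) \<and> mass c0 \<le> mass c}"
  have fin: "finite (measure \<mu> ` ?B)" using finite_heavy_polydiscs[OF c0(2)] by simp
  have ne: "measure \<mu> ` ?B \<noteq> {}" using c0 by blast
  have "Max (measure \<mu> ` ?B) \<in> measure \<mu> ` ?B" by (rule Max_in[OF fin ne])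
  then obtain b where b: "b \<in> ?B" "Max (measure \<mu> ` ?B) = measure \<mu> b"
    by (rule imageE)
  from b(1) obtain g where g: "b = polydisc g" "g \<in> PiE N (\<lambda>_. UNIV)" "mass c0 \<le> mass g" by blast
  have le: "mass c \<le> mass g" if c: "c \<in> PiE N (\<lambda>_. UNIV)" for c
  proof (cases "mass c0 \<le> mass c")
    case True
    then have "measure \<mu> (polydisc c) \<in> measure \<mu> ` ?B" using c by blast
    then have "measure \<mu> (polydisc c) \<le> Max (measure \<mu> ` ?B)" by (rule Max_ge[OF fin])
    then have "mass c \<le> Max (measure \<mu> ` ?B)" by (simp only: mass_def)
    then show ?thesis using b g by (simp add: mass_def)
  next
    case False then show ?thesis using g by simp
  qed
  have "0 < mass g" using g(3) c0(2) by linarith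
  then show ?thesis using g(2) le by blast
qed

lemma mass_vadd_scaled_ge:
  assumes "av a \<le> 1"
  shows "mass c * mass d \<le> mass (vadd_scaled c a d)"
proof -
  let ?S = "{p \<in> space (\<mu> \<Otimes>\<^sub>M \<mu>). (\<lambda>i\<in>N. fst p i + a * snd p i) \<in> polydisc (vadd_scaled c a d)}"
  have "mass c * mass d = measure (\<mu> \<Otimes>\<^sub>M \<mu>) (polydisc c \<times> polydisc d)" by (simp add: measure_law_pair_Times mass_def)
  also have "\<dots> \<le> measure (\<mu> \<Otimes>\<^sub>M \<mu>) ?S"
  proof (intro law_pair.finite_measure_mono subsetI sets_shear_preimage sets_polydisc)
    fix p assume p: "p \<in> polydisc c \<times> polydisc d"
    then have "p \<in> space (\<mu> \<Otimes>\<^sub>M \<mu>)" using polydisc_subset_space by (auto simp: space_pair_measure)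
    moreover have "av (fst p i + a * snd p i - vadd_scaled c a d i) < \<rho> i" if i: "i \<in> N" for i
    proof -
      have h: "av (fst p i - c i) < \<rho> i" "av (snd p i - d i) < \<rho> i" using p i by (auto simp: polydisc_def)
      have "av (fst p i + a * snd p i - vadd_scaled c a d i) = av ((fst p i - c i) + a * (snd p i - d i))"
        using i by (simp add: vadd_scaled_def algebra_simps)
      also have "\<dots> \<le> max (av (fst p i - c i)) (av a * av (snd p i - d i))"
        using av_add_le_max[of "fst p i - c i" "a * (snd p i - d i)"] by (simp add: av_mult)
      also have "\<dots> < \<rho> i"
      proof -
        have "av a * av (snd p i - d i) \<le> av (snd p i - d i)"
          using assms by (simp add: mult_left_le_one_le)
        then show ?thesis using h by simp
      qed
      finally show ?thesis .
    qed
    ultimately show "p \<in> ?S" by (auto simp: polydisc_def)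
  qed
  also have "\<dots> = mass (vadd_scaled c a d)" unfolding mass_def by (rule measure_shear[OF assms sets_polydisc, symmetric])
  finally show ?thesis .
qed

lemma emeasure_shear_slice:
  assumes "y \<in> space \<mu>"
  shows "emeasure \<mu> ((\<lambda>x. (x, y)) -` {p \<in> space (\<mu> \<Otimes>\<^sub>M \<mu>). (\<lambda>i\<in>N. fst p i + 1 * snd p i) \<in> polydisc g})
    = ennreal (mass (vsub g y))"
proof -
  have "(\<lambda>x. (x, y)) -` {p \<in> space (\<mu> \<Otimes>\<^sub>M \<mu>). (\<lambda>i\<in>N. fst p i + 1 * snd p i) \<in> polydisc g}
      = polydisc (vsub g y)"
    using assms by (auto simp: space_pair_measure polydisc_def vsub_def algebra_simps space_law)
  then show ?thesis by (simp add: mass_def law.emeasure_eq_measure)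
qed

lemma mass_eq_nn_integral: "ennreal (mass g) = (\<integral>\<^sup>+ y. ennreal (mass (vsub g y)) \<partial>\<mu>)"
proof -
  let ?S = "{p \<in> space (\<mu> \<Otimes>\<^sub>M \<mu>). (\<lambda>i\<in>N. fst p i + 1 * snd p i) \<in> polydisc g}"
  have "ennreal (mass g) = emeasure (\<mu> \<Otimes>\<^sub>M \<mu>) ?S"
    using emeasure_shear[of 1 "polydisc g"] by (simp add: mass_def law.emeasure_eq_measure)
  also have "\<dots> = (\<integral>\<^sup>+ y. emeasure \<mu> ((\<lambda>x. (x, y)) -` ?S) \<partial>\<mu>)"
    by (rule law_pair.emeasure_pair_measure_alt2[OF sets_shear_preimage[OF sets_polydisc]])
  also have "\<dots> = (\<integral>\<^sup>+ y. ennreal (mass (vsub g y)) \<partial>\<mu>)"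
    by (intro nn_integral_cong emeasure_shear_slice)
  finally show ?thesis .
qed

lemma measurable_mass_vsub: "(\<lambda>y. ennreal (mass (vsub g y))) \<in> borel_measurable \<mu>"
proof -
  let ?S = "{p \<in> space (\<mu> \<Otimes>\<^sub>M \<mu>). (\<lambda>i\<in>N. fst p i + 1 * snd p i) \<in> polydisc g}"
  have "(\<lambda>y. emeasure \<mu> ((\<lambda>x. (x, y)) -` ?S)) \<in> borel_measurable \<mu>"
    by (rule law_pair.measurable_emeasure_Pair2[OF sets_shear_preimage[OF sets_polydisc]])
  then show ?thesis by (rule measurable_cong[THEN iffD1, rotated]) (rule emeasure_shear_slice)
qed

text \<open>With \<open>a = 1\<close> the shear invariance says \<open>\<mu> = \<mu> * \<mu>\<close>: the mass of a polydisc is the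
  \<open>\<mu>\<close>-average of the masses of its translates. For a polydisc of maximal mass almost all
  translates must therefore be maximal as well.\<close>
lemma AE_mass_vsub_max:
  assumes g: "g \<in> PiE N (\<lambda>_. UNIV)" and max: "\<forall>c\<in>PiE N (\<lambda>_. UNIV). mass c \<le> mass g"
  shows "AE y in \<mu>. mass (vsub g y) = mass g"
proof -
  let ?h = "\<lambda>y. ennreal (mass (vsub g y))"
  have hm: "?h \<in> borel_measurable \<mu>" by (rule measurable_mass_vsub)
  have cm: "(\<lambda>y. ennreal (mass g)) \<in> borel_measurable \<mu>" by simp
  have int: "(\<integral>\<^sup>+ y. ?h y \<partial>\<mu>) = ennreal (mass g)" using mass_eq_nn_integral[of g] by (rule sym)
  have fin: "(\<integral>\<^sup>+ y. ?h y \<partial>\<mu>) \<noteq> \<infinity>" unfolding int by simp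
  have mono: "AE y in \<mu>. ?h y \<le> ennreal (mass g)"
  proof (rule AE_I2)
    fix y show "?h y \<le> ennreal (mass g)" using max vsub_PiE[of g y] by (intro ennreal_leI) blast
  qed
  have dm: "(\<lambda>y. ennreal (mass g) - ?h y) \<in> borel_measurable \<mu>"
    using hm by measurable
  have "(\<integral>\<^sup>+ y. ennreal (mass g) - ?h y \<partial>\<mu>) = (\<integral>\<^sup>+ y. ennreal (mass g) \<partial>\<mu>) - (\<integral>\<^sup>+ y. ?h y \<partial>\<mu>)"
    by (rule nn_integral_diff[OF cm hm fin mono])
  also have "(\<integral>\<^sup>+ y. ennreal (mass g) \<partial>\<mu>) = ennreal (mass g)"
    using law.emeasure_space_1 by (simp add: nn_integral_const)
  finally have "(\<integral>\<^sup>+ y. ennreal (mass g) - ?h y \<partial>\<mu>) = 0" unfolding int by simp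
  then have "AE y in \<mu>. ennreal (mass g) - ?h y = 0"
    using nn_integral_0_iff_AE[OF dm] by blast
  then show ?thesis
  proof (rule eventually_mono)
    fix y assume "ennreal (mass g) - ?h y = 0"
    then have "ennreal (mass g) \<le> ?h y" by (rule ennreal_minus_eq_0)
    then have "mass g \<le> mass (vsub g y)" by (simp add: ennreal_le_iff)
    then show "mass (vsub g y) = mass g" using max vsub_PiE[of g y] by (meson antisym)
  qed
qed

lemma AE_exists_in_pos_polydisc:
  assumes "AE y in \<mu>. P y" "0 < mass d"
  shows "\<exists>y\<in>polydisc d. P y"
proof (rule ccontr)
  assume neg: "\<not> (\<exists>y\<in>polydisc d. P y)"
  from assms(1) obtain Z where Z: "{y \<in> space \<mu>. \<not> P y} \<subseteq> Z" "emeasure \<mu> Z = 0" "Z \<in> sets \<mu>"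
    by (rule AE_E)
  have "polydisc d \<subseteq> Z" using neg Z(1) polydisc_subset_space by blast
  then have "measure \<mu> (polydisc d) \<le> measure \<mu> Z" using Z(3) by (intro law.finite_measure_mono)
  also have "\<dots> = 0" using Z(2) by (simp add: law.emeasure_eq_measure)
  finally show False using assms(2) by (simp add: mass_def)
qed

lemma mass_vsub_pos_center:
  assumes g: "g \<in> PiE N (\<lambda>_. UNIV)" and max: "\<forall>c\<in>PiE N (\<lambda>_. UNIV). mass c \<le> mass g"
    and d: "d \<in> pos_centers"
  shows "mass (vsub g d) = mass g"
proof -
  obtain y where y: "y \<in> polydisc d" "mass (vsub g y) = mass g"
    using AE_exists_in_pos_polydisc[OF AE_mass_vsub_max[OF g max]] d by (auto simp: pos_centers_def)
  have "vsub g y \<in> polydisc (vsub g d)"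
    using y(1) by (auto simp: polydisc_def vsub_def av_minus_commute)
  then have "polydisc (vsub g y) = polydisc (vsub g d)" by (rule polydisc_recenter)
  then show ?thesis using y(2) by (simp add: mass_def)
qed

definition max_mass :: real where "max_mass = Sup (mass ` PiE N (\<lambda>_. UNIV))"

lemma max_mass: "0 < max_mass" "\<And>c. c \<in> PiE N (\<lambda>_. UNIV) \<Longrightarrow> mass c \<le> max_mass"
  "\<exists>g\<in>PiE N (\<lambda>_. UNIV). mass g = max_mass"
proof -
  obtain g where g: "g \<in> PiE N (\<lambda>_. UNIV)" "0 < mass g" "\<forall>c\<in>PiE N (\<lambda>_. UNIV). mass c \<le> mass g"
    using exists_max_mass by blast
  then have "max_mass = mass g" unfolding max_mass_def by (intro cSup_eq_maximum) auto
  then show "0 < max_mass" "\<And>c. c \<in> PiE N (\<lambda>_. UNIV) \<Longrightarrow> mass c \<le> max_mass"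
    "\<exists>g\<in>PiE N (\<lambda>_. UNIV). mass g = max_mass"
    using g by auto
qed

lemma mass_vsub_pos_center_max:
  assumes "g \<in> PiE N (\<lambda>_. UNIV)" "mass g = max_mass" "d \<in> pos_centers"
  shows "mass (vsub g d) = max_mass"
  using mass_vsub_pos_center[of g d] assms max_mass(2) by simp

lemma vsub_self: "vsub g g = vzero" unfolding vsub_def vzero_def by simp

lemma mass_vzero: "mass vzero = max_mass"
proof -
  obtain g where g: "g \<in> PiE N (\<lambda>_. UNIV)" "mass g = max_mass" using max_mass(3) by blast
  then have "g \<in> pos_centers" using max_mass(1) by (simp add: pos_centers_def)
  from mass_vsub_pos_center_max[OF g this] show ?thesis by (simp add: vsub_self)
qed

lemma pos_centers_mass:
  assumes "d \<in> pos_centers"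
  shows "mass d = max_mass"
proof -
  have d: "d \<in> PiE N (\<lambda>_. UNIV)" using assms by (simp add: pos_centers_def)
  have 1: "mass (vsub vzero d) = max_mass" by (rule mass_vsub_pos_center_max[OF vzero_PiE mass_vzero assms])
  then have "vsub vzero d \<in> pos_centers" using max_mass(1) by (simp add: pos_centers_def)
  from mass_vsub_pos_center_max[OF vzero_PiE mass_vzero this] have "mass (vsub vzero (vsub vzero d)) = max_mass" .
  moreover have "vsub vzero (vsub vzero d) = d" using d by (auto simp: vsub_def vzero_def fun_eq_iff PiE_def extensional_def)
  ultimately show ?thesis by simp
qed

lemma pos_centers_vadd_scaled:
  assumes "c \<in> pos_centers" "d \<in> pos_centers" "av a \<le> 1"
  shows "vadd_scaled c a d \<in> pos_centers"
proof -
  have "0 < mass c * mass d" using assms by (simp add: pos_centers_def)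
  then show ?thesis using mass_vadd_scaled_ge[OF assms(3), of c d] by (simp add: pos_centers_def)
qed

lemma vzero_pos_centers: "vzero \<in> pos_centers"
  using mass_vzero max_mass(1) by (simp add: pos_centers_def)

lemma small_pos_centers:
  assumes "l \<in> PiE N (\<lambda>_. UNIV)" "\<And>i. i \<in> N \<Longrightarrow> av (l i) < \<rho> i"
  shows "l \<in> pos_centers"
proof -
  have "l \<in> polydisc vzero" using assms by (auto simp: polydisc_def vzero_def)
  then have "polydisc l = polydisc vzero" by (rule polydisc_recenter)
  then show ?thesis using assms mass_vzero max_mass(1) by (simp add: pos_centers_def mass_def)
qed

lemma AE_pos_centers: "AE x in \<mu>. x \<in> pos_centers"
proof -
  have "{x \<in> space \<mu>. x \<notin> pos_centers} \<subseteq> (\<Union>d\<in>{d\<in>dense_centers. mass d = 0}. polydisc d)"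
  proof
    fix x assume x: "x \<in> {x \<in> space \<mu>. x \<notin> pos_centers}"
    then have xP: "x \<in> PiE N (\<lambda>_. UNIV)" using space_law by auto
    then have "mass x = 0" using x mass_nonneg[of x] by (auto simp: pos_centers_def)
    obtain d where d: "d \<in> dense_centers" "x \<in> polydisc d" using polydisc_cover[OF xP] by blast
    have "polydisc x = polydisc d" using d(2) by (rule polydisc_recenter)
    then show "x \<in> (\<Union>d\<in>{d\<in>dense_centers. mass d = 0}. polydisc d)" using d \<open>mass x = 0\<close> by (auto simp: mass_def)
  qed
  moreover have "(\<Union>d\<in>{d\<in>dense_centers. mass d = 0}. polydisc d) \<in> null_sets \<mu>"
    using countable_dense_centers by (intro null_sets_UN') (auto simp: null_sets_def law.emeasure_eq_measure mass_def)
  ultimately show ?thesis by (intro AE_I') auto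
qed

lemma mass_vsub_period:
  assumes "t \<in> pos_centers" "c \<in> PiE N (\<lambda>_. UNIV)"
  shows "mass (vsub c t) = mass c"
proof (cases "c \<in> pos_centers")
  case True
  have "vsub c t = vadd_scaled c (-1) t" by (simp add: vsub_def vadd_scaled_def)
  then have "vsub c t \<in> pos_centers" using pos_centers_vadd_scaled[OF True assms(1), of "-1"] by simp
  then show ?thesis using True pos_centers_mass by simp
next
  case False
  have "vsub c t \<notin> pos_centers"
  proof
    assume "vsub c t \<in> pos_centers"
    then have "vadd_scaled (vsub c t) 1 t \<in> pos_centers" using pos_centers_vadd_scaled assms(1) by simp
    moreover have "vadd_scaled (vsub c t) 1 t = c" using assms(2)
      by (auto simp: vadd_scaled_def vsub_def fun_eq_iff PiE_def extensional_def)
    ultimately show False using False by simp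
  qed
  then show ?thesis using False mass_nonneg[of c] mass_nonneg[of "vsub c t"] assms(2) by (auto simp: pos_centers_def)
qed

lemma pos_centers_bound:
  assumes ae: "AE x in \<mu>. \<forall>i\<in>N. av (x i) \<le> r i" and s: "s \<in> pos_centers" and i: "i \<in> N"
  shows "av (s i) \<le> r i \<or> av (s i) < \<rho> i"
proof -
  obtain x where x: "x \<in> polydisc s" "\<forall>i\<in>N. av (x i) \<le> r i"
    using AE_exists_in_pos_polydisc[OF ae, of s] s by (auto simp: pos_centers_def)
  have le: "av (s i) \<le> max (av (s i - x i)) (av (x i))" using av_add_le_max[of "s i - x i" "x i"] by simp
  have a: "av (s i - x i) < \<rho> i" using x(1) i by (auto simp: polydisc_def av_minus_commute)
  have b: "av (x i) \<le> r i" using x(2) i by blast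
  show ?thesis using le a b by linarith
qed

end

section \<open>Lattices containing a box\<close>

text \<open>The algebraic core: a module over the valuation ring squeezed between a small polydisc and the
  union of that polydisc with the box \<open>|s\<^sub>i| \<le> r\<^sub>i\<close> contains the whole box, provided the coordinates
  are orthogonal in the weak sense \<open>orth\<close>.\<close>
locale box_module = nonarch_field av for av :: "'k::{field,metric_space} \<Rightarrow> real" +
  fixes N :: "nat set" and S :: "(nat \<Rightarrow> 'k) set" and r \<rho> :: "nat \<Rightarrow> real" and \<epsilon> :: real
  assumes finite_N: "finite N"
    and lin: "\<And>c d a. c \<in> S \<Longrightarrow> d \<in> S \<Longrightarrow> av a \<le> 1 \<Longrightarrow> (\<lambda>i\<in>N. c i + a * d i) \<in> S"
    and zero: "(\<lambda>i\<in>N. 0) \<in> S"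
    and small: "\<And>l. l \<in> PiE N (\<lambda>_. UNIV) \<Longrightarrow> (\<And>i. i \<in> N \<Longrightarrow> av (l i) < \<rho> i) \<Longrightarrow> l \<in> S"
    and bound: "\<And>s i. s \<in> S \<Longrightarrow> i \<in> N \<Longrightarrow> av (s i) \<le> r i \<or> av (s i) < \<rho> i"
    and r_nonneg: "\<And>i. i \<in> N \<Longrightarrow> 0 \<le> r i"
    and r_value: "\<And>i. i \<in> N \<Longrightarrow> r i \<in> range av"
    and radius: "\<And>i. i \<in> N \<Longrightarrow> \<rho> i = \<epsilon> * (if 0 < r i then r i else 1)"
    and eps: "0 < \<epsilon>" "\<epsilon> \<le> theta"
    and orth: "\<And>\<alpha>. (\<forall>s\<in>S. av (\<Sum>i\<in>N. \<alpha> i * s i) \<le> theta * Max (insert 0 ((\<lambda>i. av (\<alpha> i) * r i) ` N)))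
                 \<Longrightarrow> Max (insert 0 ((\<lambda>i. av (\<alpha> i) * r i) ` N)) = 0"
begin

lemma radius_pos: "i \<in> N \<Longrightarrow> 0 < \<rho> i"
  using radius eps(1) by simp

lemma sum_mem:
  assumes "finite A" "\<And>i. i \<in> A \<Longrightarrow> W i \<in> S" "\<And>i. i \<in> A \<Longrightarrow> av (a i) \<le> 1"
  shows "(\<lambda>k\<in>N. \<Sum>i\<in>A. a i * W i k) \<in> S"
  using assms
proof (induction A rule: finite_induct)
  case empty then show ?case using zero by (simp only: sum.empty)
next
  case (insert x F)
  have "(\<lambda>k\<in>N. \<Sum>i\<in>F. a i * W i k) \<in> S" using insert by (simp add: restrict_def)
  from lin[OF this insert.prems(1)[of x] insert.prems(2)[of x]]
  have "(\<lambda>i\<in>N. (\<lambda>k\<in>N. \<Sum>i\<in>F. a i * W i k) i + a x * W x i) \<in> S" by simp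
  moreover have "(\<lambda>i\<in>N. (\<lambda>k\<in>N. \<Sum>i\<in>F. a i * W i k) i + a x * W x i) = (\<lambda>k\<in>N. \<Sum>i\<in>insert x F. a i * W i k)"
    using insert(1,2) by (auto simp: fun_eq_iff add.commute)
  ultimately show ?case by (metis (no_types))
qed

text \<open>Otherwise cut off the part of \<open>u\<close> on \<open>I\<close>, which lies in \<open>S\<close> by \<open>small\<close>, and rescale.\<close>
lemma coord_less_if_no_witness:
  assumes I: "I \<subseteq> N" "j \<in> N" "j \<notin> I" and no_witness: "\<not> (\<exists>w\<in>S. w j = y \<and> (\<forall>k\<in>I. w k = 0))"
    and u: "u \<in> S" "\<And>k. k \<in> I \<Longrightarrow> av (u k) < \<rho> k"
  shows "av (u j) < av y"
proof (rule ccontr)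
  assume "\<not> av (u j) < av y"
  then have ge: "av y \<le> av (u j)" by simp
  define l where "l = (\<lambda>k\<in>N. if k \<in> I then u k else 0)"
  have "l \<in> S" using u(2) radius_pos by (intro small) (auto simp: l_def)
  define w where "w = (\<lambda>i\<in>N. u i + (-1) * l i)"
  have w: "w \<in> S" unfolding w_def using lin[OF u(1) \<open>l \<in> S\<close>, of "-1"] by simp
  have w0: "\<forall>k\<in>I. w k = 0" and wj: "w j = u j" using I by (auto simp: w_def l_def)
  show False
  proof (cases "u j = 0")
    case True
    then have "y = 0" using ge by simp
    then have "(\<lambda>i\<in>N. 0) j = y \<and> (\<forall>k\<in>I. (\<lambda>i\<in>N. 0::'k) k = 0)" using I by auto
    then show False using no_witness zero by blast
  next
    case False
    define a where "a = y / u j"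
    have a: "av a \<le> 1" unfolding a_def using False ge by (simp add: av_divide divide_le_eq_1)
    have "(\<lambda>i\<in>N. (\<lambda>i\<in>N. 0) i + a * w i) \<in> S" by (rule lin[OF zero w a])
    moreover have "(\<lambda>i\<in>N. (\<lambda>i\<in>N. 0) i + a * w i) j = y" using I wj False by (simp add: a_def)
    moreover have "\<forall>k\<in>I. (\<lambda>i\<in>N. (\<lambda>i\<in>N. 0) i + a * w i) k = 0" using w0 I by auto
    ultimately show False using no_witness by blast
  qed
qed

text \<open>The coefficients \<open>s\<^sub>i / W\<^sub>i\<^sub>i\<close> are integral because \<open>|s\<^sub>i| \<le> |W\<^sub>i\<^sub>i|\<close>.\<close>
lemma clear_coords:
  assumes A: "finite A" "A \<subseteq> I" "I \<subseteq> N"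
    and W: "\<And>i. i \<in> A \<Longrightarrow> W i \<in> S \<and> W i i \<noteq> 0 \<and> (\<forall>k\<in>I-{i}. W i k = 0)"
    and s: "s \<in> S" "\<And>i. i \<in> A \<Longrightarrow> av (s i) \<le> av (W i i)"
  shows "(\<lambda>k\<in>N. s k + (\<Sum>i\<in>A. (- (s i / W i i)) * W i k)) \<in> S"
    and "k \<in> I \<Longrightarrow> (\<lambda>k\<in>N. s k + (\<Sum>i\<in>A. (- (s i / W i i)) * W i k)) k = (if k \<in> A then 0 else s k)"
proof -
  have v: "(\<lambda>k\<in>N. \<Sum>i\<in>A. (- (s i / W i i)) * W i k) \<in> S"
    using A(1) W s(2) by (intro sum_mem) (auto simp: av_divide divide_le_eq_1)
  have "(\<lambda>i\<in>N. s i + 1 * (\<lambda>k\<in>N. \<Sum>i\<in>A. (- (s i / W i i)) * W i k) i)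
      = (\<lambda>k\<in>N. s k + (\<Sum>i\<in>A. (- (s i / W i i)) * W i k))"
    by (rule restrict_ext) simp
  with lin[OF s(1) v, of 1]
  show "(\<lambda>k\<in>N. s k + (\<Sum>i\<in>A. (- (s i / W i i)) * W i k)) \<in> S" by simp
  assume k: "k \<in> I"
  have "(\<Sum>i\<in>A. (- (s i / W i i)) * W i k) = (\<Sum>i\<in>A. if i = k then - s k else 0)"
    using W k by (intro sum.cong) auto
  then show "(\<lambda>k\<in>N. s k + (\<Sum>i\<in>A. (- (s i / W i i)) * W i k)) k = (if k \<in> A then 0 else s k)"
    using A k by auto
qed

text \<open>The \<open>W\<^sub>k\<close> are the vectors provided by the induction hypothesis. Clear the coordinates of \<open>s\<close> on
  which this is possible; the rest is controlled by \<open>coord_less_if_no_witness\<close> and \<open>bound\<close>.\<close>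
lemma combination_small:
  assumes I: "I \<subseteq> N" "j \<in> N" "j \<notin> I" and y: "av y \<le> r j" "0 < r j"
    and no_witness: "\<not> (\<exists>w\<in>S. w j = y \<and> (\<forall>k\<in>I. w k = 0))"
    and W: "\<And>i. i \<in> I \<Longrightarrow> 0 < r i \<Longrightarrow> W i \<in> S \<and> av (W i i) = r i \<and> (\<forall>k\<in>I-{i}. W i k = 0)"
    and s: "s \<in> S"
  shows "av (s j + (\<Sum>k\<in>{i\<in>I. 0 < r i}. (- (W k j / W k k)) * s k)) \<le> theta * r j"
proof -
  define P where "P = {i\<in>I. 0 < r i}"
  define A where "A = {i \<in> P. av (s i) \<le> r i}"
  have fin: "finite P" "finite A" "A \<subseteq> P" using I finite_N unfolding P_def A_def by (auto intro: finite_subset)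
  have W': "W i \<in> S \<and> W i i \<noteq> 0 \<and> (\<forall>k\<in>I-{i}. W i k = 0)" if "i \<in> A" for i
    using W[of i] that by (auto simp: A_def P_def)
  let ?u = "\<lambda>k\<in>N. s k + (\<Sum>i\<in>A. (- (s i / W i i)) * W i k)"
  have sA: "av (s i) \<le> av (W i i)" if "i \<in> A" for i using that W[of i] by (auto simp: A_def P_def)
  have "A \<subseteq> I" using fin(3) by (auto simp: P_def)
  have u: "?u \<in> S" by (rule clear_coords(1)[OF fin(2) \<open>A \<subseteq> I\<close> I(1) W' s sA])
  have u_I: "?u k = (if k \<in> A then 0 else s k)" if "k \<in> I" for k
    by (rule clear_coords(2)[OF fin(2) \<open>A \<subseteq> I\<close> I(1) W' s sA that])
  have small_I: "av (?u k) < \<rho> k" if k: "k \<in> I" for k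
  proof (cases "k \<in> A")
    case True then show ?thesis using u_I[OF k] radius_pos I k by auto
  next
    case False
    have "k \<in> N" using I k by auto
    then have "av (s k) < \<rho> k"
      using False bound[OF s, of k] radius[of k] r_nonneg[of k] k eps by (auto simp: A_def P_def)
    then show ?thesis using u_I[OF k] False by simp
  qed
  have "av (?u j) < av y" by (rule coord_less_if_no_witness[OF I no_witness u small_I])
  then have "av (?u j) \<le> theta * av y" by (rule av_less_imp_le_theta)
  also have "\<dots> \<le> theta * r j" using y(1) theta_pos by simp
  finally have uj: "av (?u j) \<le> theta * r j" .
  have "(\<Sum>k\<in>P. (- (W k j / W k k)) * s k)
      = (\<Sum>k\<in>P-A. (- (W k j / W k k)) * s k) + (\<Sum>k\<in>A. (- (W k j / W k k)) * s k)"
    by (rule sum.subset_diff[OF fin(3,1)])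
  also have "(\<Sum>k\<in>A. (- (W k j / W k k)) * s k) = (\<Sum>k\<in>A. (- (s k / W k k)) * W k j)"
    by (intro sum.cong) (simp_all add: divide_simps)
  finally have "(\<Sum>k\<in>P. (- (W k j / W k k)) * s k)
      = (\<Sum>k\<in>A. (- (s k / W k k)) * W k j) + (\<Sum>k\<in>P-A. (- (W k j / W k k)) * s k)"
    by (simp only: add.commute)
  then have split: "s j + (\<Sum>k\<in>P. (- (W k j / W k k)) * s k) = ?u j + (\<Sum>k\<in>P-A. (- (W k j / W k k)) * s k)"
    using I by simp
  have rest: "av (\<Sum>k\<in>P-A. (- (W k j / W k k)) * s k) \<le> theta * r j"
  proof (rule av_sum_le)
    fix k assume k: "k \<in> P - A"
    then have kI: "k \<in> I" "0 < r k" by (auto simp: P_def)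
    have "av (s k) < \<epsilon> * r k"
      using k bound[OF s, of k] radius[of k] I kI by (auto simp: A_def P_def)
    moreover have "\<rho> j \<le> r j"
      using radius[OF I(2)] y(2) eps theta_less_1 by (simp add: mult_le_cancel_right1)
    then have "av (W k j) \<le> r j"
      using bound[OF conjunct1[OF W[OF kI]] I(2)] by linarith
    ultimately have "av (W k j) * av (s k) \<le> r j * (\<epsilon> * r k)"
      using y(2) by (intro mult_mono) auto
    then have "av ((- (W k j / W k k)) * s k) \<le> \<epsilon> * r j"
      using W[OF kI] kI by (simp add: av_mult av_divide field_simps)
    also have "\<dots> \<le> theta * r j" using eps y(2) by simp
    finally show "av ((- (W k j / W k k)) * s k) \<le> theta * r j" .
  qed (use fin y(2) theta_pos in auto)
  have "av (s j + (\<Sum>k\<in>P. (- (W k j / W k k)) * s k)) \<le> theta * r j"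
    unfolding split using av_add_le_max[of "?u j" "\<Sum>k\<in>P-A. (- (W k j / W k k)) * s k"] uj rest
    by linarith
  then show ?thesis by (simp only: P_def)
qed

lemma exists_coord_vector:
  "I \<subseteq> N \<Longrightarrow> j \<in> I \<Longrightarrow> av y \<le> r j \<Longrightarrow> \<exists>w\<in>S. w j = y \<and> (\<forall>k\<in>I-{j}. w k = 0)"
proof (induction "card I" arbitrary: I j y rule: less_induct)
  case less
  have I: "I \<subseteq> N" "j \<in> I" "j \<in> N" and y: "av y \<le> r j" using less.prems by auto
  show ?case
  proof (rule ccontr)
    assume no_witness: "\<not> (\<exists>w\<in>S. w j = y \<and> (\<forall>k\<in>I-{j}. w k = 0))"
    have rj: "0 < r j"
    proof (rule ccontr)
      assume "\<not> 0 < r j"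
      then have "y = 0" using y r_nonneg[OF I(3)] by simp
      then have "(\<lambda>i\<in>N. 0) j = y \<and> (\<forall>k\<in>I-{j}. (\<lambda>i\<in>N. 0::'k) k = 0)" using I by auto
      then show False using no_witness zero by blast
    qed
    have card: "card (I - {j}) < card I"
      using I finite_N by (meson card_Diff1_less finite_subset)
    have "\<exists>w. w \<in> S \<and> av (w i) = r i \<and> (\<forall>k\<in>I-{j}-{i}. w k = 0)" if i: "i \<in> I - {j}" for i
    proof -
      have "r i \<in> range av" using i I by (intro r_value) auto
      then obtain x where x: "r i = av x" by blast
      have "I - {j} \<subseteq> N" using I by auto
      from less.hyps[OF card this i, of x] x show ?thesis by auto
    qed
    then obtain W where W: "\<And>i. i \<in> I - {j} \<Longrightarrow> W i \<in> S \<and> av (W i i) = r i \<and> (\<forall>k\<in>I-{j}-{i}. W i k = 0)"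
      by metis
    define \<alpha> where "\<alpha> k = (if k = j then 1 else if k \<in> I - {j} \<and> 0 < r k then - (W k j / W k k) else 0)" for k
    let ?M = "Max (insert 0 ((\<lambda>i. av (\<alpha> i) * r i) ` N))"
    have I': "I - {j} \<subseteq> N" "j \<notin> I - {j}" using I by auto
    have W': "W i \<in> S \<and> av (W i i) = r i \<and> (\<forall>k\<in>I-{j}-{i}. W i k = 0)" if "i \<in> I - {j}" "0 < r i" for i
      using W that(1) .
    have "av (\<alpha> j) * r j \<le> ?M"
      using I finite_N by (intro Max_ge) auto
    then have "r j \<le> ?M" by (simp add: \<alpha>_def)
    moreover have "\<forall>s\<in>S. av (\<Sum>i\<in>N. \<alpha> i * s i) \<le> theta * ?M"
    proof
      fix s assume s: "s \<in> S"
      let ?P = "{i\<in>I-{j}. 0 < r i}"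
      have P: "?P \<subseteq> N" "j \<notin> ?P" using I by auto
      have "(\<Sum>i\<in>N. \<alpha> i * s i) = (\<Sum>i\<in>N. (if i = j then s i else 0)
          + (if i \<in> ?P then (- (W i j / W i i)) * s i else 0))"
        by (intro sum.cong) (simp_all add: \<alpha>_def)
      also have "\<dots> = (\<Sum>i\<in>N. if i = j then s i else 0)
          + (\<Sum>i\<in>N. if i \<in> ?P then (- (W i j / W i i)) * s i else 0)"
        by (rule sum.distrib)
      also have "(\<Sum>i\<in>N. if i = j then s i else 0) = s j"
        using I finite_N by simp
      also have "(\<Sum>i\<in>N. if i \<in> ?P then (- (W i j / W i i)) * s i else 0)
          = (\<Sum>i\<in>N \<inter> ?P. (- (W i j / W i i)) * s i)"
        by (rule sum.inter_restrict[OF finite_N, symmetric])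
      also have "N \<inter> ?P = ?P" using P by blast
      also have "av (s j + (\<Sum>i\<in>?P. (- (W i j / W i i)) * s i)) \<le> theta * r j"
        by (rule combination_small[OF I'(1) I(3) I'(2) y rj no_witness W' s])
      also have "\<dots> \<le> theta * ?M" using \<open>r j \<le> ?M\<close> theta_pos by simp
      finally show "av (\<Sum>i\<in>N. \<alpha> i * s i) \<le> theta * ?M" .
    qed
    ultimately show False using orth[of \<alpha>] rj by simp
  qed
qed

lemma box_subset:
  assumes t: "t \<in> PiE N (\<lambda>_. UNIV)" "\<And>i. i \<in> N \<Longrightarrow> av (t i) \<le> r i"
  shows "t \<in> S"
proof -
  have "\<exists>w. w \<in> S \<and> w j = t j \<and> (\<forall>k\<in>N-{j}. w k = 0)" if "j \<in> N" for j
    using exists_coord_vector[of N j "t j"] t(2) that by blast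
  then obtain W where W: "\<And>j. j \<in> N \<Longrightarrow> W j \<in> S \<and> W j j = t j \<and> (\<forall>k\<in>N-{j}. W j k = 0)"
    by metis
  have "(\<lambda>k\<in>N. \<Sum>j\<in>N. 1 * W j k) \<in> S"
    using W finite_N by (intro sum_mem) auto
  moreover have "(\<lambda>k\<in>N. \<Sum>j\<in>N. 1 * W j k) = t"
  proof
    fix k show "(\<lambda>k\<in>N. \<Sum>j\<in>N. 1 * W j k) k = t k"
    proof (cases "k \<in> N")
      case True
      have "(\<Sum>j\<in>N. 1 * W j k) = (\<Sum>j\<in>N. if j = k then t k else 0)"
        using W True by (intro sum.cong) auto
      then show ?thesis using True finite_N by simp
    qed (use t(1) in \<open>simp add: PiE_def extensional_def\<close>)
  qed
  ultimately show ?thesis by simp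
qed

end

section \<open>Translation invariance of orthogonal Gaussian laws\<close>

locale gaussian_orth = gaussian_law av N \<mu> for av :: "'k::{field,metric_space} \<Rightarrow> real" and N \<mu> +
  fixes r :: "nat \<Rightarrow> real"
  assumes r_nonneg: "\<And>i. i \<in> N \<Longrightarrow> 0 \<le> r i"
    and r_value: "\<And>i. i \<in> N \<Longrightarrow> r i \<in> range av"
    and r_ae: "AE x in \<mu>. \<forall>i\<in>N. av (x i) \<le> r i"
    and r_orth: "\<And>\<alpha>. (AE x in \<mu>. av (\<Sum>i\<in>N. \<alpha> i * x i) \<le> theta * Max (insert 0 ((\<lambda>i. av (\<alpha> i) * r i) ` N)))
                 \<Longrightarrow> Max (insert 0 ((\<lambda>i. av (\<alpha> i) * r i) ` N)) = 0"
begin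

definition scale where "scale i = (if 0 < r i then r i else 1)"
definition disc where
  "disc \<epsilon> c = {x \<in> PiE N (\<lambda>_. UNIV). \<forall>i\<in>N. av (x i - c i) < \<epsilon> * scale i}"

lemma scale_pos: "0 < scale i" unfolding scale_def by simp

lemma polydiscs_scaled: "0 < \<epsilon> \<Longrightarrow> gaussian_polydiscs av N \<mu> (\<lambda>i. \<epsilon> * scale i)"
  by unfold_locales (simp add: scale_pos)

lemma sets_disc: "0 < \<epsilon> \<Longrightarrow> disc \<epsilon> c \<in> sets \<mu>"
proof -
  assume e: "0 < \<epsilon>"
  interpret g: gaussian_polydiscs av N \<mu> "\<lambda>i. \<epsilon> * scale i" by (rule polydiscs_scaled[OF e])
  show ?thesis using g.sets_polydisc unfolding g.polydisc_def disc_def .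
qed

lemma disc_recenter: "0 < \<epsilon> \<Longrightarrow> y \<in> disc \<epsilon> c \<Longrightarrow> disc \<epsilon> y = disc \<epsilon> c"
proof -
  assume e: "0 < \<epsilon>" and y: "y \<in> disc \<epsilon> c"
  interpret g: gaussian_polydiscs av N \<mu> "\<lambda>i. \<epsilon> * scale i" by (rule polydiscs_scaled[OF e])
  show ?thesis using g.polydisc_recenter[of y c] y unfolding g.polydisc_def disc_def by simp
qed

lemma disc_mono: "\<epsilon> \<le> \<epsilon>' \<Longrightarrow> disc \<epsilon> c \<subseteq> disc \<epsilon>' c"
proof
  fix x assume le: "\<epsilon> \<le> \<epsilon>'" and x: "x \<in> disc \<epsilon> c"
  have "\<epsilon> * scale i \<le> \<epsilon>' * scale i" for i using le scale_pos[of i] by (simp add: mult_right_mono)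
  then show "x \<in> disc \<epsilon>' c" using x unfolding disc_def by (auto intro: less_le_trans)
qed

lemma pos_centers_box_module:
  assumes e: "0 < \<epsilon>" "\<epsilon> \<le> theta"
  shows "box_module av N (gaussian_polydiscs.pos_centers av N \<mu> (\<lambda>i. \<epsilon> * scale i)) r (\<lambda>i. \<epsilon> * scale i) \<epsilon>"
proof -
  interpret g: gaussian_polydiscs av N \<mu> "\<lambda>i. \<epsilon> * scale i" by (rule polydiscs_scaled[OF e(1)])
  show ?thesis
  proof unfold_locales
    fix c d a assume "c \<in> g.pos_centers" "d \<in> g.pos_centers" "av a \<le> 1"
    from g.pos_centers_vadd_scaled[OF this] show "(\<lambda>i\<in>N. c i + a * d i) \<in> g.pos_centers"
      unfolding g.vadd_scaled_def .
  next
    show "(\<lambda>i\<in>N. 0) \<in> g.pos_centers" using g.vzero_pos_centers unfolding g.vzero_def .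
  next
    fix \<alpha> :: "nat \<Rightarrow> 'k"
    assume "\<forall>s\<in>g.pos_centers. av (\<Sum>i\<in>N. \<alpha> i * s i) \<le> theta * Max (insert 0 ((\<lambda>i. av (\<alpha> i) * r i) ` N))"
    with g.AE_pos_centers
    have "AE x in \<mu>. av (\<Sum>i\<in>N. \<alpha> i * x i) \<le> theta * Max (insert 0 ((\<lambda>i. av (\<alpha> i) * r i) ` N))"
      by (auto elim: AE_mp)
    then show "Max (insert 0 ((\<lambda>i. av (\<alpha> i) * r i) ` N)) = 0" by (rule r_orth)
  qed (use finite_N g.small_pos_centers g.pos_centers_bound[OF r_ae] r_nonneg r_value e
       in \<open>auto simp: scale_def\<close>)
qed

text \<open>Every \<open>t\<close> in the box is a positive centre, hence a period of the masses of the discs.\<close>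
lemma measure_disc_shift:
  assumes e: "0 < \<epsilon>" "\<epsilon> \<le> theta" and t: "t \<in> PiE N (\<lambda>_. UNIV)" "\<forall>i\<in>N. av (t i) \<le> r i"
    and c: "c \<in> PiE N (\<lambda>_. UNIV)"
  shows "measure \<mu> (disc \<epsilon> (\<lambda>i\<in>N. c i - t i)) = measure \<mu> (disc \<epsilon> c)"
proof -
  interpret g: gaussian_polydiscs av N \<mu> "\<lambda>i. \<epsilon> * scale i" by (rule polydiscs_scaled[OF e(1)])
  interpret box_module av N g.pos_centers r "\<lambda>i. \<epsilon> * scale i" \<epsilon> by (rule pos_centers_box_module[OF e])
  have "t \<in> g.pos_centers" using t by (intro box_subset) auto
  from g.mass_vsub_period[OF this c] show ?thesis
    unfolding g.mass_def g.vsub_def g.polydisc_def disc_def .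
qed

definition small_discs where
  "small_discs = {disc \<epsilon> c | \<epsilon> c. 0 < \<epsilon> \<and> \<epsilon> \<le> theta \<and> c \<in> PiE N (\<lambda>_. UNIV)} \<union> {{}, space \<mu>}"

lemma small_discs_subset_sets: "small_discs \<subseteq> sets \<mu>"
  unfolding small_discs_def using sets_disc by auto

lemma small_discs_subset_Pow: "small_discs \<subseteq> Pow (space \<mu>)"
  using small_discs_subset_sets sets.sets_into_space by blast

lemma disc_Int_in_small_discs: assumes "0 < \<epsilon>" "\<epsilon> \<le> theta" "0 < \<epsilon>'" "\<epsilon>' \<le> theta"
  shows "disc \<epsilon> c \<inter> disc \<epsilon>' c' \<in> small_discs"
proof (cases "disc \<epsilon> c \<inter> disc \<epsilon>' c' = {}")
  case True then show ?thesis by (simp add: small_discs_def)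
next
  case False
  then obtain z where z: "z \<in> disc \<epsilon> c" "z \<in> disc \<epsilon>' c'" by blast
  have zP: "z \<in> PiE N (\<lambda>_. UNIV)" using z(1) by (simp add: disc_def)
  have e1: "disc \<epsilon> c = disc \<epsilon> z" using disc_recenter[OF assms(1) z(1)] by simp
  have e2: "disc \<epsilon>' c' = disc \<epsilon>' z" using disc_recenter[OF assms(3) z(2)] by simp
  show ?thesis
  proof (cases "\<epsilon> \<le> \<epsilon>'")
    case True
    then have "disc \<epsilon> c \<inter> disc \<epsilon>' c' = disc \<epsilon> z" using disc_mono[OF True, of z] e1 e2 by auto
    then show ?thesis using assms zP by (auto simp: small_discs_def)
  next
    case False
    then have "disc \<epsilon> c \<inter> disc \<epsilon>' c' = disc \<epsilon>' z" using disc_mono[of \<epsilon>' \<epsilon> z] e1 e2 by auto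
    then show ?thesis using assms zP by (auto simp: small_discs_def)
  qed
qed

lemma Int_stable_small_discs: "Int_stable small_discs"
proof (rule Int_stableI)
  fix a b assume a: "a \<in> small_discs" and b: "b \<in> small_discs"
  have asp: "a \<subseteq> space \<mu>" "b \<subseteq> space \<mu>" using a b small_discs_subset_Pow by auto
  show "a \<inter> b \<in> small_discs"
  proof (cases "a = {} \<or> b = {}")
    case True then show ?thesis by (auto simp: small_discs_def)
  next
    case F1: False
    show ?thesis
    proof (cases "a = space \<mu>")
      case True then show ?thesis using b asp by (simp add: Int_absorb1)
    next
      case F2: False
      show ?thesis
      proof (cases "b = space \<mu>")
        case True then show ?thesis using a asp by (simp add: Int_absorb2)
      next
        case F3: False
        obtain \<epsilon> c where ea: "a = disc \<epsilon> c" "0 < \<epsilon>" "\<epsilon> \<le> theta" using a F1 F2 by (auto simp: small_discs_def)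
        obtain \<epsilon>' c' where eb: "b = disc \<epsilon>' c'" "0 < \<epsilon>'" "\<epsilon>' \<le> theta" using b F1 F3 by (auto simp: small_discs_def)
        show ?thesis using disc_Int_in_small_discs[OF ea(2,3) eb(2,3)] ea(1) eb(1) by simp
      qed
    qed
  qed
qed

lemma measurable_coord_small_discs:
  assumes i: "i \<in> N"
  shows "(\<lambda>f. f i) \<in> measurable (sigma (space \<mu>) small_discs) borel"
proof -
  have "(\<lambda>f. f i) \<in> measurable (sigma (space \<mu>) small_discs) (sigma UNIV dense_balls)"
  proof (rule measurable_measure_of)
    show "dense_balls \<subseteq> Pow UNIV" by simp
    show "(\<lambda>f. f i) \<in> space (sigma (space \<mu>) small_discs) \<rightarrow> UNIV" by simp
    fix B assume "B \<in> dense_balls"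
    then obtain d m where dm: "d \<in> dense_set" "B = ball d (1 / Suc m)" unfolding dense_balls_def by auto
    define r' :: real where "r' = 1 / Suc m"
    have r'pos: "0 < r'" unfolding r'_def by simp
    define e0 where "e0 = min theta (r' / scale i)"
    have e0: "0 < e0" "e0 \<le> theta" "e0 * scale i \<le> r'"
      unfolding e0_def using theta_pos r'pos scale_pos[of i] by (auto simp: min_def field_simps)
    interpret g: gaussian_polydiscs av N \<mu> "\<lambda>i. e0 * scale i" by (rule polydiscs_scaled[OF e0(1)])
    define C where "C = {c \<in> PiE N (\<lambda>_. dense_set). av (d - c i) < r'}"
    have cC: "countable C" using g.countable_dense_centers unfolding C_def g.dense_centers_def
      by (rule countable_subset[rotated]) auto
    have eq: "(\<lambda>f. f i) -` B \<inter> space (sigma (space \<mu>) small_discs) = (\<Union>c\<in>C. disc e0 c)"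
    proof (intro set_eqI iffI)
      fix f assume "f \<in> (\<lambda>f. f i) -` B \<inter> space (sigma (space \<mu>) small_discs)"
      then have f: "f \<in> PiE N (\<lambda>_. UNIV)" "av (d - f i) < r'"
        using small_discs_subset_Pow by (auto simp: dm r'_def dist_eq_av space_law)
      obtain c where c: "c \<in> g.dense_centers" "f \<in> g.polydisc c" using g.polydisc_cover[OF f(1)] by blast
      have fc: "av (f i - c i) < e0 * scale i" using c(2) i by (simp add: g.polydisc_def)
      have "av (d - c i) = av ((d - f i) + (f i - c i))" by simp
      also have "\<dots> \<le> max (av (d - f i)) (av (f i - c i))" by (rule av_add_le_max)
      also have "\<dots> < r'" using f(2) fc e0(3) by simp
      finally have "c \<in> C" using c(1) by (simp add: C_def g.dense_centers_def)
      moreover have "f \<in> disc e0 c" using c(2) by (simp add: g.polydisc_def disc_def)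
      ultimately show "f \<in> (\<Union>c\<in>C. disc e0 c)" by blast
    next
      fix f assume "f \<in> (\<Union>c\<in>C. disc e0 c)"
      then obtain c where c: "c \<in> C" "f \<in> disc e0 c" by blast
      have fP: "f \<in> PiE N (\<lambda>_. UNIV)" using c(2) by (simp add: disc_def)
      have fc: "av (f i - c i) < e0 * scale i" using c(2) i by (simp add: disc_def)
      have "av (d - f i) = av ((d - c i) + (c i - f i))" by simp
      also have "\<dots> \<le> max (av (d - c i)) (av (c i - f i))" by (rule av_add_le_max)
      also have "\<dots> < r'" using c(1) fc e0(3) by (simp add: C_def av_minus_commute)
      finally show "f \<in> (\<lambda>f. f i) -` B \<inter> space (sigma (space \<mu>) small_discs)"
        using fP small_discs_subset_Pow by (simp add: dm r'_def dist_eq_av space_law)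
    qed
    have "(\<Union>c\<in>C. disc e0 c) \<in> sets (sigma (space \<mu>) small_discs)"
    proof (rule sets.countable_UN''[OF cC])
      fix c assume "c \<in> C"
      then have "disc e0 c \<in> small_discs" using e0 by (auto simp: small_discs_def C_def PiE_iff)
      then show "disc e0 c \<in> sets (sigma (space \<mu>) small_discs)" using small_discs_subset_Pow by auto
    qed
    then show "(\<lambda>f. f i) -` B \<inter> space (sigma (space \<mu>) small_discs) \<in> sets (sigma (space \<mu>) small_discs)"
      using eq by simp
  qed
  then show ?thesis by (simp add: borel_eq_dense_balls)
qed

lemma sets_eq_sigma_small_discs: "sets \<mu> = sigma_sets (space \<mu>) small_discs"
proof (rule antisym)
  have "sets \<mu> = sigma_sets (PiE N (\<lambda>_. UNIV)) {{f \<in> PiE N (\<lambda>_. UNIV). f i \<in> A} | i A. i \<in> N \<and> A \<in> sets borel}"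
    unfolding sets_law by (simp add: sets_PiM_single)
  also have "\<dots> \<subseteq> sigma_sets (space \<mu>) small_discs"
    unfolding space_law[symmetric]
  proof (rule sigma_sets_mono, safe)
    fix i and A :: "'k set" assume i: "i \<in> N" and A: "A \<in> sets borel"
    have "(\<lambda>f. f i) -` A \<inter> space (sigma (space \<mu>) small_discs) \<in> sets (sigma (space \<mu>) small_discs)"
      using measurable_sets[OF measurable_coord_small_discs[OF i] A] .
    then show "{f \<in> space \<mu>. f i \<in> A} \<in> sigma_sets (space \<mu>) small_discs"
      using small_discs_subset_Pow by (simp add: Int_def conj_commute vimage_def)
  qed
  finally show "sets \<mu> \<subseteq> sigma_sets (space \<mu>) small_discs" .
  show "sigma_sets (space \<mu>) small_discs \<subseteq> sets \<mu>"
    by (rule sets.sigma_sets_subset[OF small_discs_subset_sets])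
qed

lemma measurable_shift: "(\<lambda>x. \<lambda>i\<in>N. x i + t i) \<in> measurable \<mu> (PiM N (\<lambda>_. borel :: 'k measure))"
proof -
  have "(\<lambda>x. \<lambda>i\<in>N. x i + t i) \<in> measurable (PiM N (\<lambda>_. borel :: 'k measure)) (PiM N (\<lambda>_. borel :: 'k measure))"
    by measurable
  then show ?thesis by (subst measurable_cong_sets[OF sets_law refl])
qed

lemma distr_shift_eq:
  assumes t: "t \<in> PiE N (\<lambda>_. UNIV)" "\<forall>i\<in>N. av (t i) \<le> r i"
  shows "distr \<mu> (PiM N (\<lambda>_. borel :: 'k measure)) (\<lambda>x. \<lambda>i\<in>N. x i + t i) = \<mu>"
proof (rule measure_eqI_generator_eq[where \<Omega> = "space \<mu>" and E = small_discs and A = "\<lambda>_. space \<mu>"])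
  show "Int_stable small_discs" by (rule Int_stable_small_discs)
  show "small_discs \<subseteq> Pow (space \<mu>)" by (rule small_discs_subset_Pow)
  show "sets (distr \<mu> (PiM N (\<lambda>_. borel)) (\<lambda>x. \<lambda>i\<in>N. x i + t i)) = sigma_sets (space \<mu>) small_discs"
    using sets_eq_sigma_small_discs sets_law by simp
  show "sets \<mu> = sigma_sets (space \<mu>) small_discs" by (rule sets_eq_sigma_small_discs)
  show "range (\<lambda>_. space \<mu>) \<subseteq> small_discs" by (simp add: small_discs_def)
  show "(\<Union>i::nat. space \<mu>) = space \<mu>" by simp
  show "emeasure (distr \<mu> (PiM N (\<lambda>_. borel)) (\<lambda>x. \<lambda>i\<in>N. x i + t i)) (space \<mu>) \<noteq> \<infinity>" for i::nat
  proof -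
    have sp: "space \<mu> \<in> sets (PiM N (\<lambda>_. borel :: 'k measure))" using sets_law sets.top by metis
    show ?thesis using emeasure_distr[OF measurable_shift sp] by (simp add: law.emeasure_eq_measure)
  qed
  fix X assume X: "X \<in> small_discs"
  have Xs: "X \<in> sets (PiM N (\<lambda>_. borel :: 'k measure))" using X small_discs_subset_sets sets_law by auto
  have "emeasure (distr \<mu> (PiM N (\<lambda>_. borel)) (\<lambda>x. \<lambda>i\<in>N. x i + t i)) X
      = emeasure \<mu> ((\<lambda>x. \<lambda>i\<in>N. x i + t i) -` X \<inter> space \<mu>)"
    by (rule emeasure_distr[OF measurable_shift Xs])
  also have "\<dots> = emeasure \<mu> X"
  proof -
    consider "X = {}" | "X = space \<mu>" | \<epsilon> c where "X = disc \<epsilon> c" "0 < \<epsilon>" "\<epsilon> \<le> theta" "c \<in> PiE N (\<lambda>_. UNIV)"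
      using X unfolding small_discs_def by blast
    then show ?thesis
    proof cases
      case 1 then show ?thesis by simp
    next
      case 2 then show ?thesis by (simp add: space_law Int_absorb1 subsetI)
    next
      case 3
      have "(\<lambda>x. \<lambda>i\<in>N. x i + t i) -` X \<inter> space \<mu> = disc \<epsilon> (\<lambda>i\<in>N. c i - t i)"
        using 3 by (auto simp: disc_def space_law algebra_simps)
      then have "emeasure \<mu> ((\<lambda>x. \<lambda>i\<in>N. x i + t i) -` X \<inter> space \<mu>) = measure \<mu> (disc \<epsilon> (\<lambda>i\<in>N. c i - t i))"
        by (simp add: law.emeasure_eq_measure)
      also have "\<dots> = ennreal (measure \<mu> (disc \<epsilon> c))" using measure_disc_shift[OF 3(2,3) t 3(4)] by simp
      finally show ?thesis using 3 by (simp add: law.emeasure_eq_measure)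
    qed
  qed
  finally show "emeasure (distr \<mu> (PiM N (\<lambda>_. borel)) (\<lambda>x. \<lambda>i\<in>N. x i + t i)) X = emeasure \<mu> X" .
qed

end

section \<open>Products of laws on \<open>K\<close>\<close>

lemma PiM_pair_measure_eqI:
  fixes M :: "'i \<Rightarrow> 'a measure"
  assumes N: "finite N"
    and sets: "sets P = sets (PiM N M \<Otimes>\<^sub>M PiM N M)" "sets Q = sets (PiM N M \<Otimes>\<^sub>M PiM N M)"
    and finite: "emeasure P (space (PiM N M) \<times> space (PiM N M)) \<noteq> \<infinity>"
    and eq: "\<And>X Y. X \<in> Pi N (\<lambda>i. sets (M i)) \<Longrightarrow> Y \<in> Pi N (\<lambda>i. sets (M i)) \<Longrightarrow>
      emeasure P (PiE N X \<times> PiE N Y) = emeasure Q (PiE N X \<times> PiE N Y)"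
  shows "P = Q"
proof -
  let ?E = "PiM N M"
  define boxes where "boxes = {PiE N X | X. X \<in> Pi N (\<lambda>i. sets (M i))}"
  define G where "G = {a \<times> b | a b. a \<in> boxes \<and> b \<in> boxes}"
  have boxes_Pow: "boxes \<subseteq> Pow (space ?E)"
    unfolding boxes_def space_PiM by (auto simp: PiE_iff dest: sets.sets_into_space)
  have sets_E: "sets ?E = sigma_sets (space ?E) boxes"
    unfolding sets_PiM prod_algebra_eq_finite[OF N] boxes_def by (simp add: space_PiM)
  have space_boxes: "space ?E \<in> boxes" unfolding boxes_def space_PiM by auto
  have sets_EE: "sets (?E \<Otimes>\<^sub>M ?E) = sigma_sets (space ?E \<times> space ?E) G"
  proof -
    have "sets (?E \<Otimes>\<^sub>M ?E) = sets (sigma (space ?E \<times> space ?E) G)"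
      unfolding G_def
      by (rule sets_pair_eq[OF boxes_Pow sets_E _ _ _ boxes_Pow sets_E, of "{space ?E}" "{space ?E}"])
         (use space_boxes in auto)
    also have "\<dots> = sigma_sets (space ?E \<times> space ?E) G"
      unfolding G_def using boxes_Pow by (intro sets_measure_of) auto
    finally show ?thesis .
  qed
  show ?thesis
  proof (rule measure_eqI_generator_eq[where \<Omega> = "space ?E \<times> space ?E" and E = G and A = "\<lambda>_. space ?E \<times> space ?E"])
    show "Int_stable G"
    proof (rule Int_stableI)
      fix a b assume "a \<in> G" "b \<in> G"
      then obtain X Y X' Y' where ab: "a = PiE N X \<times> PiE N Y" "b = PiE N X' \<times> PiE N Y'"
        "X \<in> Pi N (\<lambda>i. sets (M i))" "Y \<in> Pi N (\<lambda>i. sets (M i))"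
        "X' \<in> Pi N (\<lambda>i. sets (M i))" "Y' \<in> Pi N (\<lambda>i. sets (M i))"
        unfolding G_def boxes_def by blast
      have "a \<inter> b = PiE N (\<lambda>i. X i \<inter> X' i) \<times> PiE N (\<lambda>i. Y i \<inter> Y' i)"
        unfolding ab by (auto simp: PiE_Int[symmetric])
      moreover have "(\<lambda>i. X i \<inter> X' i) \<in> Pi N (\<lambda>i. sets (M i))" "(\<lambda>i. Y i \<inter> Y' i) \<in> Pi N (\<lambda>i. sets (M i))"
        using ab by auto
      ultimately show "a \<inter> b \<in> G" unfolding G_def boxes_def by blast
    qed
    show "G \<subseteq> Pow (space ?E \<times> space ?E)" unfolding G_def using boxes_Pow by auto
    show "sets P = sigma_sets (space ?E \<times> space ?E) G" "sets Q = sigma_sets (space ?E \<times> space ?E) G"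
      using sets sets_EE by simp_all
    show "range (\<lambda>_. space ?E \<times> space ?E) \<subseteq> G" using space_boxes unfolding G_def by blast
  qed (use finite eq in \<open>auto simp: G_def boxes_def\<close>)
qed

locale product_law = nonarch_field av for av :: "'k::{field,metric_space} \<Rightarrow> real" +
  fixes N :: "nat set" and marg :: "nat \<Rightarrow> 'k measure"
  assumes finite_N: "finite N" and prob_space_marg: "\<And>i. prob_space (marg i)" and sets_marg: "\<And>i. sets (marg i) = sets borel"

lemma (in product_law) finite_product_prob_space_marg: "finite_product_prob_space marg N"
  by (intro finite_product_prob_space.intro finite_product_sigma_finite.intro product_prob_space.intro
      product_sigma_finite.intro product_prob_space_axioms.intro finite_product_sigma_finite_axioms.intro)
     (auto simp: prob_space_marg prob_space_imp_sigma_finite finite_N)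

sublocale product_law \<subseteq> prod: finite_product_prob_space marg N by (rule finite_product_prob_space_marg)

context product_law begin

lemma prob_space_PiM_marg: "prob_space (PiM N marg)" by (rule prod.prob_space_axioms)

lemma sets_PiM_marg: "sets (PiM N marg) = sets (PiM N (\<lambda>_. borel :: 'k measure))"
  by (intro sets_PiM_cong refl sets_marg)

lemma space_PiM_marg: "space (PiM N marg) = PiE N (\<lambda>_. UNIV)"
  by (simp add: space_PiM sets_eq_imp_space_eq[OF sets_marg])

lemma space_marg: "space (marg i) = UNIV" using sets_eq_imp_space_eq[OF sets_marg] by simp

lemma sets_pair_marg: "sets (marg i \<Otimes>\<^sub>M marg i) = sets (borel \<Otimes>\<^sub>M borel :: ('k \<times> 'k) measure)"
  by (intro sets_pair_measure_cong sets_marg)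

lemma emeasure_pair_PiM_coordwise:
  assumes C: "\<And>i. i \<in> N \<Longrightarrow> C i \<in> sets (borel \<Otimes>\<^sub>M borel :: ('k \<times> 'k) measure)"
  shows "emeasure (PiM N marg \<Otimes>\<^sub>M PiM N marg) {p \<in> space (PiM N marg \<Otimes>\<^sub>M PiM N marg). \<forall>i\<in>N. (fst p i, snd p i) \<in> C i}
       = (\<Prod>i\<in>N. emeasure (marg i \<Otimes>\<^sub>M marg i) (C i))"
proof -

  let ?S = "{p \<in> space (PiM N marg \<Otimes>\<^sub>M PiM N marg). \<forall>i\<in>N. (fst p i, snd p i) \<in> C i}"
  have Ci: "C i \<in> sets (marg i \<Otimes>\<^sub>M marg i)" if "i \<in> N" for i using C[OF that] sets_pair_marg by simp
  have S: "?S \<in> sets (PiM N marg \<Otimes>\<^sub>M PiM N marg)"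
  proof -
    have "?S = space (PiM N marg \<Otimes>\<^sub>M PiM N marg) \<inter> (\<Inter>i\<in>N. (\<lambda>p. (fst p i, snd p i)) -` C i \<inter> space (PiM N marg \<Otimes>\<^sub>M PiM N marg))"
      by auto
    also have "\<dots> \<in> sets (PiM N marg \<Otimes>\<^sub>M PiM N marg)"
    proof (cases "N = {}")
      case True then show ?thesis by simp
    next
      case False
      show ?thesis
      proof (rule sets.Int[OF sets.top], rule sets.finite_INT[OF finite_N False])
      fix i assume i: "i \<in> N"
      have "(\<lambda>p. (fst p i, snd p i)) \<in> measurable (PiM N marg \<Otimes>\<^sub>M PiM N marg) (marg i \<Otimes>\<^sub>M marg i)"
        using i by measurable
      then show "(\<lambda>p. (fst p i, snd p i)) -` C i \<inter> space (PiM N marg \<Otimes>\<^sub>M PiM N marg) \<in> sets (PiM N marg \<Otimes>\<^sub>M PiM N marg)"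
        using Ci[OF i] by (rule measurable_sets)
      qed
    qed
    finally show ?thesis .
  qed
  have "emeasure (PiM N marg \<Otimes>\<^sub>M PiM N marg) ?S = (\<integral>\<^sup>+ x. emeasure (PiM N marg) (Pair x -` ?S) \<partial>PiM N marg)"
    by (rule prod.emeasure_pair_measure_alt[OF S])
  also have "\<dots> = (\<integral>\<^sup>+ x. (\<Prod>i\<in>N. emeasure (marg i) (Pair (x i) -` C i)) \<partial>PiM N marg)"
  proof (rule nn_integral_cong)
    fix x assume x: "x \<in> space (PiM N marg)"
    have "Pair x -` ?S = PiE N (\<lambda>i. Pair (x i) -` C i)"
      using x by (auto simp: space_pair_measure space_PiM_marg PiE_iff extensional_def)
    moreover have "emeasure (PiM N marg) (PiE N (\<lambda>i. Pair (x i) -` C i)) = (\<Prod>i\<in>N. emeasure (marg i) (Pair (x i) -` C i))"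
      by (rule prod.emeasure_PiM[OF finite_N]) (use Ci in \<open>auto intro: sets_Pair1\<close>)
    ultimately show "emeasure (PiM N marg) (Pair x -` ?S) = (\<Prod>i\<in>N. emeasure (marg i) (Pair (x i) -` C i))" by simp
  qed
  also have "\<dots> = (\<Prod>i\<in>N. \<integral>\<^sup>+ u. emeasure (marg i) (Pair u -` C i) \<partial>marg i)"
    by (rule prod.product_nn_integral_prod[OF finite_N]) (use Ci in \<open>auto intro: prod.M.measurable_emeasure_Pair\<close>)
  also have "\<dots> = (\<Prod>i\<in>N. emeasure (marg i \<Otimes>\<^sub>M marg i) (C i))"
    by (rule prod.cong[OF refl]) (use Ci in \<open>simp add: prod.M.emeasure_pair_measure_alt\<close>)
  finally show ?thesis .
qed

lemma measurable_add_const[measurable]: "(\<lambda>w::'k. w + c) \<in> borel_measurable borel"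
  by measurable

lemma distr_shift_PiM_marg:
  assumes inv: "\<And>i A. i \<in> N \<Longrightarrow> A \<in> sets borel \<Longrightarrow> emeasure (marg i) ((\<lambda>w. w + t i) -` A) = emeasure (marg i) A"
  shows "distr (PiM N marg) (PiM N (\<lambda>_. borel)) (\<lambda>x. \<lambda>i\<in>N. x i + t i) = PiM N marg"
proof -
  have T: "(\<lambda>x. \<lambda>i\<in>N. x i + t i) \<in> measurable (PiM N marg) (PiM N (\<lambda>_. borel :: 'k measure))"
  proof -
    have "(\<lambda>x. \<lambda>i\<in>N. x i + t i) \<in> measurable (PiM N (\<lambda>_. borel :: 'k measure)) (PiM N (\<lambda>_. borel :: 'k measure))"
      by measurable
    then show ?thesis by (subst measurable_cong_sets[OF sets_PiM_marg refl])
  qed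
  show ?thesis
  proof (rule prod.PiM_eqI[OF finite_N])
    show "sets (distr (PiM N marg) (PiM N (\<lambda>_. borel)) (\<lambda>x. \<lambda>i\<in>N. x i + t i)) = sets (PiM N marg)"
      using sets_PiM_marg by simp
    fix A assume A: "\<And>i. i \<in> N \<Longrightarrow> A i \<in> sets (marg i)"
    have Ab: "A i \<in> sets borel" if "i \<in> N" for i using A[OF that] sets_marg by simp
    have PA: "PiE N A \<in> sets (PiM N (\<lambda>_. borel :: 'k measure))"
      using Ab finite_N by (intro sets_PiM_I_finite) auto
    have "emeasure (distr (PiM N marg) (PiM N (\<lambda>_. borel)) (\<lambda>x. \<lambda>i\<in>N. x i + t i)) (PiE N A)
        = emeasure (PiM N marg) ((\<lambda>x. \<lambda>i\<in>N. x i + t i) -` PiE N A \<inter> space (PiM N marg))"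
      by (rule emeasure_distr[OF T PA])
    also have "(\<lambda>x. \<lambda>i\<in>N. x i + t i) -` PiE N A \<inter> space (PiM N marg) = PiE N (\<lambda>i. (\<lambda>w. w + t i) -` A i)"
      by (auto simp: space_PiM_marg PiE_iff)
    also have "emeasure (PiM N marg) (PiE N (\<lambda>i. (\<lambda>w. w + t i) -` A i)) = (\<Prod>i\<in>N. emeasure (marg i) ((\<lambda>w. w + t i) -` A i))"
    proof (rule prod.emeasure_PiM[OF finite_N])
      fix i assume i: "i \<in> N"
      have "(\<lambda>w. w + t i) -` A i \<inter> space borel \<in> sets borel"
        using Ab[OF i] by (intro measurable_sets[OF measurable_add_const])
      then show "(\<lambda>w. w + t i) -` A i \<in> sets (marg i)" using sets_marg by simp
    qed
    also have "\<dots> = (\<Prod>i\<in>N. emeasure (marg i) (A i))"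
      by (rule prod.cong[OF refl]) (rule inv[OF _ Ab])
    finally show "emeasure (distr (PiM N marg) (PiM N (\<lambda>_. borel)) (\<lambda>x. \<lambda>i\<in>N. x i + t i)) (PiE N A) = (\<Prod>i\<in>N. emeasure (marg i) (A i))" .
  qed
qed

lemma measurable_linear_pair[measurable]:
  "(\<lambda>(x1::'k, x2::'k). (a11 * x1 + a12 * x2, a21 * x1 + a22 * x2)) \<in> measurable (borel \<Otimes>\<^sub>M borel) (borel \<Otimes>\<^sub>M borel)"
proof -
  have "(\<lambda>p::'k \<times> 'k. (a11 * fst p + a12 * snd p, a21 * fst p + a22 * snd p)) \<in> measurable (borel \<Otimes>\<^sub>M borel) (borel \<Otimes>\<^sub>M borel)"
    by measurable
  then show ?thesis by (simp add: case_prod_beta')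
qed

lemma distr_linear_pair_PiM_marg:
  assumes G: "\<And>i. i \<in> N \<Longrightarrow> distr (marg i \<Otimes>\<^sub>M marg i) (borel \<Otimes>\<^sub>M borel) (\<lambda>(x1, x2). (a11 * x1 + a12 * x2, a21 * x1 + a22 * x2)) = marg i \<Otimes>\<^sub>M marg i"
  shows "distr (PiM N marg \<Otimes>\<^sub>M PiM N marg) (PiM N (\<lambda>_. borel) \<Otimes>\<^sub>M PiM N (\<lambda>_. borel))
      (\<lambda>(x1, x2). (\<lambda>i\<in>N. a11 * x1 i + a12 * x2 i, \<lambda>i\<in>N. a21 * x1 i + a22 * x2 i)) = PiM N marg \<Otimes>\<^sub>M PiM N marg"
    (is "distr ?Q (?E \<Otimes>\<^sub>M ?E) ?F = ?Q")
proof (rule PiM_pair_measure_eqI[OF finite_N])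
  let ?f = "\<lambda>(x1::'k, x2::'k). (a11 * x1 + a12 * x2, a21 * x1 + a22 * x2)"
  have sets_Q: "sets ?Q = sets (?E \<Otimes>\<^sub>M ?E)" by (intro sets_pair_measure_cong sets_PiM_marg)
  then have space_Q: "space ?Q = PiE N (\<lambda>_. UNIV) \<times> PiE N (\<lambda>_. UNIV)"
    using sets_eq_imp_space_eq[OF sets_Q] by (simp add: space_pair_measure space_PiM)
  have "(\<lambda>p. (\<lambda>i\<in>N. a11 * fst p i + a12 * snd p i, \<lambda>i\<in>N. a21 * fst p i + a22 * snd p i))
      \<in> measurable (?E \<Otimes>\<^sub>M ?E) (?E \<Otimes>\<^sub>M ?E)"
    by measurable
  then have F: "?F \<in> measurable ?Q (?E \<Otimes>\<^sub>M ?E)"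
    by (simp add: case_prod_beta' measurable_cong_sets[OF sets_Q refl])
  interpret Q: prob_space ?Q by (intro prob_space_pair prob_space_PiM_marg)
  show "sets (distr ?Q (?E \<Otimes>\<^sub>M ?E) ?F) = sets (?E \<Otimes>\<^sub>M ?E)" "sets ?Q = sets (?E \<Otimes>\<^sub>M ?E)"
    using sets_Q by simp_all
  interpret distr_Q: prob_space "distr ?Q (?E \<Otimes>\<^sub>M ?E) ?F" by (rule Q.prob_space_distr[OF F])
  show "emeasure (distr ?Q (?E \<Otimes>\<^sub>M ?E) ?F) (space ?E \<times> space ?E) \<noteq> \<infinity>"
    using distr_Q.emeasure_space_1 by (simp add: space_pair_measure)
  fix X Y :: "nat \<Rightarrow> 'k set"
  assume X: "X \<in> Pi N (\<lambda>_. sets borel)" and Y: "Y \<in> Pi N (\<lambda>_. sets borel)"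
  have XY: "X i \<times> Y i \<in> sets (borel \<Otimes>\<^sub>M borel)" if "i \<in> N" for i using X Y that by auto
  have marg_f: "emeasure (marg i \<Otimes>\<^sub>M marg i) (?f -` (X i \<times> Y i)) = emeasure (marg i \<Otimes>\<^sub>M marg i) (X i \<times> Y i)"
    if i: "i \<in> N" for i
  proof -
    have "?f \<in> measurable (marg i \<Otimes>\<^sub>M marg i) (borel \<Otimes>\<^sub>M borel)"
      by (simp add: measurable_cong_sets[OF sets_pair_marg refl])
    from emeasure_distr[OF this XY[OF i]] G[OF i]
    show ?thesis by (simp add: space_pair_measure space_marg)
  qed
  have "PiE N X \<times> PiE N Y \<in> sets (?E \<Otimes>\<^sub>M ?E)"
    using X Y finite_N by (intro pair_measureI sets_PiM_I_finite) auto
  then have "emeasure (distr ?Q (?E \<Otimes>\<^sub>M ?E) ?F) (PiE N X \<times> PiE N Y)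
      = emeasure ?Q (?F -` (PiE N X \<times> PiE N Y) \<inter> space ?Q)"
    by (rule emeasure_distr[OF F])
  also have "?F -` (PiE N X \<times> PiE N Y) \<inter> space ?Q
      = {p \<in> space ?Q. \<forall>i\<in>N. (fst p i, snd p i) \<in> ?f -` (X i \<times> Y i)}"
    by (auto simp: space_Q PiE_iff)
  also have "emeasure ?Q \<dots> = (\<Prod>i\<in>N. emeasure (marg i \<Otimes>\<^sub>M marg i) (?f -` (X i \<times> Y i)))"
  proof (rule emeasure_pair_PiM_coordwise)
    fix i assume "i \<in> N"
    from measurable_sets[OF measurable_linear_pair XY[OF this]]
    show "?f -` (X i \<times> Y i) \<in> sets (borel \<Otimes>\<^sub>M borel)" by (simp add: space_pair_measure)
  qed
  also have "\<dots> = (\<Prod>i\<in>N. emeasure (marg i \<Otimes>\<^sub>M marg i) (X i \<times> Y i))"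
    using marg_f by simp
  also have "\<dots> = emeasure ?Q {p \<in> space ?Q. \<forall>i\<in>N. (fst p i, snd p i) \<in> X i \<times> Y i}"
    using XY by (rule emeasure_pair_PiM_coordwise[symmetric])
  also have "{p \<in> space ?Q. \<forall>i\<in>N. (fst p i, snd p i) \<in> X i \<times> Y i} = PiE N X \<times> PiE N Y"
    using X Y by (auto simp: space_Q PiE_iff)
  finally show "emeasure (distr ?Q (?E \<Otimes>\<^sub>M ?E) ?F) (PiE N X \<times> PiE N Y) = emeasure ?Q (PiE N X \<times> PiE N Y)" .
qed

end

section \<open>Essential suprema of absolute values\<close>

context nonarch_field
begin

text \<open>The values of \<open>av\<close> in \<open>[s/2, s]\<close> are finitely many, so a least a.e.\ bound \<open>s\<close> that is not
  a value could be lowered to the largest value below it.\<close>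
lemma least_AE_bound_in_range_av:
  assumes s: "AE \<omega> in M. av (f \<omega>) \<le> s" "0 \<le> s"
    and least: "\<And>c. (AE \<omega> in M. av (f \<omega>) \<le> c) \<Longrightarrow> s \<le> c"
  shows "s \<in> range av"
proof (rule ccontr)
  assume not_value: "s \<notin> range av"
  then have "s \<noteq> 0" by (metis av_0 rangeI)
  then have s_pos: "0 < s" using s(2) by simp
  define V where "V = {av x | x. s / 2 \<le> av x \<and> av x \<le> s}"
  have fin: "finite V" unfolding V_def using finite_av_values_between[of "s/2" s] s_pos by simp
  define m where "m = Max (insert (s/2) V)"
  have "u < s" if "u \<in> insert (s/2) V" for u
    using that s_pos not_value unfolding V_def by (auto simp: less_le)
  then have "m < s" unfolding m_def using fin by simp
  have "s / 2 \<le> m" unfolding m_def using fin by (intro Max_ge) auto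
  have "AE \<omega> in M. av (f \<omega>) \<le> m"
    using s(1)
  proof (rule AE_mp, intro AE_I2 impI)
    fix \<omega> assume le: "av (f \<omega>) \<le> s"
    show "av (f \<omega>) \<le> m"
    proof (rule ccontr)
      assume "\<not> av (f \<omega>) \<le> m"
      then have "av (f \<omega>) \<in> V" using le \<open>s / 2 \<le> m\<close> unfolding V_def by auto
      then have "av (f \<omega>) \<le> m" unfolding m_def using fin by simp
      then show False using \<open>\<not> av (f \<omega>) \<le> m\<close> by simp
    qed
  qed
  then show False using least \<open>m < s\<close> by force
qed

lemma esssup_av_eq_ereal:
  fixes f :: "'a \<Rightarrow> 'k"
  assumes M: "prob_space M" and f: "f \<in> borel_measurable M" and bounded: "AE \<omega> in M. av (f \<omega>) < R"
  shows "\<exists>s. esssup M (\<lambda>\<omega>. ereal (av (f \<omega>))) = ereal s \<and> 0 \<le> s \<and> (AE \<omega> in M. av (f \<omega>) \<le> s)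
    \<and> (\<forall>c. (AE \<omega> in M. av (f \<omega>) \<le> c) \<longrightarrow> s \<le> c) \<and> s \<in> range av"
proof -
  interpret prob_space M by (rule M)
  let ?s = "esssup M (\<lambda>\<omega>. ereal (av (f \<omega>)))"
  have meas: "(\<lambda>\<omega>. ereal (av (f \<omega>))) \<in> borel_measurable M" using f by measurable
  have esssup_le: "?s \<le> ereal c" if "AE \<omega> in M. av (f \<omega>) \<le> c" for c
    by (rule esssup_I[OF meas]) (use that in \<open>auto elim: AE_mp\<close>)
  have "?s \<le> ereal R" using bounded by (intro esssup_le) (auto elim: AE_mp)
  moreover have "esssup M (\<lambda>\<omega>. 0::ereal) \<le> ?s" by (rule esssup_AE_mono) auto
  then have "0 \<le> ?s" by (simp add: esssup_const emeasure_space_1)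
  ultimately obtain s where s: "?s = ereal s" "0 \<le> s" by (cases ?s) auto
  have AE_s: "AE \<omega> in M. av (f \<omega>) \<le> s"
    using esssup_AE[of "\<lambda>\<omega>. ereal (av (f \<omega>))" M] unfolding s(1) by simp
  have least: "s \<le> c" if "AE \<omega> in M. av (f \<omega>) \<le> c" for c
    using esssup_le[OF that] s(1) by simp
  show ?thesis using least_AE_bound_in_range_av[OF AE_s s(2) least] s AE_s least by blast
qed

lemma measurable_add_vec [measurable]:
  "(\<lambda>p. \<lambda>i\<in>N. fst p i + snd p i)
    \<in> measurable (PiM N (\<lambda>_. borel :: 'k measure) \<Otimes>\<^sub>M PiM N (\<lambda>_. borel)) (PiM N (\<lambda>_. borel))"
  by measurable

text \<open>Fubini for the law of \<open>x + z\<close> under \<open>\<mu> \<otimes> \<nu>\<close>, once slicing along \<open>z\<close> and once along \<open>x\<close>.\<close>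
lemma eq_if_shift_invariant_AE:
  fixes \<mu> \<nu> :: "(nat \<Rightarrow> 'k) measure"
  assumes prob: "prob_space \<mu>" "prob_space \<nu>"
    and sets: "sets \<mu> = sets (PiM N (\<lambda>_. borel))" "sets \<nu> = sets (PiM N (\<lambda>_. borel))"
    and \<mu>_inv: "AE z in \<nu>. distr \<mu> (PiM N (\<lambda>_. borel)) (\<lambda>x. \<lambda>i\<in>N. x i + z i) = \<mu>"
    and \<nu>_inv: "AE x in \<mu>. distr \<nu> (PiM N (\<lambda>_. borel)) (\<lambda>z. \<lambda>i\<in>N. x i + z i) = \<nu>"
  shows "\<mu> = \<nu>"
proof (rule measure_eqI)
  let ?E = "PiM N (\<lambda>_. borel :: 'k measure)"
  interpret \<mu>: prob_space \<mu> by (rule prob(1))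
  interpret \<nu>: prob_space \<nu> by (rule prob(2))
  interpret pair: pair_sigma_finite \<mu> \<nu> by unfold_locales
  show "sets \<mu> = sets \<nu>" using sets by simp
  fix A assume A: "A \<in> sets \<mu>"
  let ?S = "{p \<in> space (\<mu> \<Otimes>\<^sub>M \<nu>). (\<lambda>i\<in>N. fst p i + snd p i) \<in> A}"
  have sets_pair: "sets (\<mu> \<Otimes>\<^sub>M \<nu>) = sets (?E \<Otimes>\<^sub>M ?E)" by (intro sets_pair_measure_cong sets)
  have "(\<lambda>p. \<lambda>i\<in>N. fst p i + snd p i) \<in> measurable (\<mu> \<Otimes>\<^sub>M \<nu>) ?E"
    using measurable_add_vec by (simp add: measurable_cong_sets[OF sets_pair refl])
  from measurable_sets[OF this, of A]
  have S: "?S \<in> sets (\<mu> \<Otimes>\<^sub>M \<nu>)" using A sets(1) by (simp add: Int_def conj_commute vimage_def)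
  have shift_x: "(\<lambda>x. \<lambda>i\<in>N. x i + z i) \<in> measurable \<mu> ?E" for z
    by (simp add: measurable_cong_sets[OF sets(1) refl])
  have shift_z: "(\<lambda>z. \<lambda>i\<in>N. x i + z i) \<in> measurable \<nu> ?E" for x
    by (simp add: measurable_cong_sets[OF sets(2) refl])
  have "emeasure (\<mu> \<Otimes>\<^sub>M \<nu>) ?S = (\<integral>\<^sup>+ z. emeasure \<mu> ((\<lambda>x. (x, z)) -` ?S) \<partial>\<nu>)"
    by (rule pair.emeasure_pair_measure_alt2[OF S])
  also have "\<dots> = (\<integral>\<^sup>+ z. emeasure \<mu> A \<partial>\<nu>)"
  proof (rule nn_integral_cong_AE)
    show "AE z in \<nu>. emeasure \<mu> ((\<lambda>x. (x, z)) -` ?S) = emeasure \<mu> A"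
      using \<mu>_inv
    proof (rule AE_mp, intro AE_I2 impI)
      fix z assume z: "z \<in> space \<nu>" and inv: "distr \<mu> ?E (\<lambda>x. \<lambda>i\<in>N. x i + z i) = \<mu>"
      have "(\<lambda>x. (x, z)) -` ?S = (\<lambda>x. \<lambda>i\<in>N. x i + z i) -` A \<inter> space \<mu>"
        using z by (auto simp: space_pair_measure)
      also have "emeasure \<mu> \<dots> = emeasure (distr \<mu> ?E (\<lambda>x. \<lambda>i\<in>N. x i + z i)) A"
        using A sets by (intro emeasure_distr[symmetric] shift_x) simp
      finally show "emeasure \<mu> ((\<lambda>x. (x, z)) -` ?S) = emeasure \<mu> A" unfolding inv .
    qed
  qed
  also have "\<dots> = emeasure \<mu> A" by (simp add: \<nu>.emeasure_space_1)
  finally have "emeasure (\<mu> \<Otimes>\<^sub>M \<nu>) ?S = emeasure \<mu> A" .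
  moreover have "emeasure (\<mu> \<Otimes>\<^sub>M \<nu>) ?S = (\<integral>\<^sup>+ x. emeasure \<nu> (Pair x -` ?S) \<partial>\<mu>)"
    by (rule \<nu>.emeasure_pair_measure_alt[OF S])
  moreover have "\<dots> = (\<integral>\<^sup>+ x. emeasure \<nu> A \<partial>\<mu>)"
  proof (rule nn_integral_cong_AE)
    show "AE x in \<mu>. emeasure \<nu> (Pair x -` ?S) = emeasure \<nu> A"
      using \<nu>_inv
    proof (rule AE_mp, intro AE_I2 impI)
      fix x assume x: "x \<in> space \<mu>" and inv: "distr \<nu> ?E (\<lambda>z. \<lambda>i\<in>N. x i + z i) = \<nu>"
      have "Pair x -` ?S = (\<lambda>z. \<lambda>i\<in>N. x i + z i) -` A \<inter> space \<nu>"
        using x by (auto simp: space_pair_measure)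
      also have "emeasure \<nu> \<dots> = emeasure (distr \<nu> ?E (\<lambda>z. \<lambda>i\<in>N. x i + z i)) A"
        using A sets by (intro emeasure_distr[symmetric] shift_z) simp
      finally show "emeasure \<nu> (Pair x -` ?S) = emeasure \<nu> A" unfolding inv .
    qed
  qed
  moreover have "\<dots> = emeasure \<nu> A" by (simp add: \<mu>.emeasure_space_1)
  ultimately show "emeasure \<mu> A = emeasure \<nu> A" by simp
qed

text \<open>A shift leaving the law invariant also respects every almost sure bound on a linear form:
  compare the bound at a typical \<open>x\<close> and at \<open>x + t\<close>.\<close>
lemma av_linear_form_le_if_shift_invariant:
  fixes \<mu> :: "(nat \<Rightarrow> 'k) measure"
  assumes prob: "prob_space \<mu>" and sets: "sets \<mu> = sets (PiM N (\<lambda>_. borel))"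
    and inv: "distr \<mu> (PiM N (\<lambda>_. borel)) (\<lambda>x. \<lambda>i\<in>N. x i + t i) = \<mu>"
    and bound: "AE x in \<mu>. av (\<Sum>i\<in>N. \<alpha> i * x i) \<le> v"
  shows "av (\<Sum>i\<in>N. \<alpha> i * t i) \<le> v"
proof -
  interpret prob_space \<mu> by (rule prob)
  let ?E = "PiM N (\<lambda>_. borel :: 'k measure)"
  have shift: "(\<lambda>x. \<lambda>i\<in>N. x i + t i) \<in> measurable \<mu> ?E"
    by (simp add: measurable_cong_sets[OF sets refl])
  have S: "{x \<in> space ?E. av (\<Sum>i\<in>N. \<alpha> i * x i) \<le> v} \<in> sets ?E" by measurable
  have "AE x in distr \<mu> ?E (\<lambda>x. \<lambda>i\<in>N. x i + t i). av (\<Sum>i\<in>N. \<alpha> i * x i) \<le> v"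
    using bound by (simp only: inv)
  then have "AE x in \<mu>. av (\<Sum>i\<in>N. \<alpha> i * (x i + t i)) \<le> v"
    by (subst (asm) AE_distr_iff[OF shift S]) simp
  with bound have "AE x in \<mu>. av (\<Sum>i\<in>N. \<alpha> i * x i) \<le> v \<and> av (\<Sum>i\<in>N. \<alpha> i * (x i + t i)) \<le> v"
    by (rule AE_conjI)
  then obtain Z where Z: "Z \<subseteq> {x \<in> space \<mu>. av (\<Sum>i\<in>N. \<alpha> i * x i) \<le> v \<and> av (\<Sum>i\<in>N. \<alpha> i * (x i + t i)) \<le> v}"
    "prob Z = 1" by (rule AE_E_prob)
  then have "Z \<noteq> {}" by auto
  then obtain x where "x \<in> Z" by blast
  with Z(1) have x: "av (\<Sum>i\<in>N. \<alpha> i * x i) \<le> v" "av (\<Sum>i\<in>N. \<alpha> i * (x i + t i)) \<le> v"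
    by auto
  have "(\<Sum>i\<in>N. \<alpha> i * t i) = (\<Sum>i\<in>N. \<alpha> i * (x i + t i)) - (\<Sum>i\<in>N. \<alpha> i * x i)"
    by (simp add: distrib_left sum.distrib)
  then show ?thesis using av_diff_le_max[of "\<Sum>i\<in>N. \<alpha> i * (x i + t i)" "\<Sum>i\<in>N. \<alpha> i * x i"] x by simp
qed

end

lemma (in nonarch_field) K_gaussian_vec_measurable:
  assumes "K_gaussian_vec av n M (\<lambda>\<omega>. \<lambda>i\<in>{..<n}. X i \<omega>)" "i < n"
  shows "X i \<in> borel_measurable M"
proof -
  have "(\<lambda>\<omega>. \<lambda>i\<in>{..<n}. X i \<omega>) \<in> measurable M (PiM {..<n} (\<lambda>_. borel :: 'k measure))"
    using assms(1) unfolding K_gaussian_vec_def K_gaussian_def by blast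
  from measurable_compose[OF this measurable_component_singleton[of i]] assms(2)
  show ?thesis by (simp cong: measurable_cong)
qed

text \<open>For \<open>i \<ge> n\<close> the law \<open>marg i\<close> is a dummy, present only because \<open>product_law\<close> needs a
  probability space at every index.\<close>
locale random_vector = nonarch_field av for av :: "'k::{field,metric_space} \<Rightarrow> real" +
  fixes M :: "'a measure" and n :: nat and X :: "nat \<Rightarrow> 'a \<Rightarrow> 'k"
  assumes prob_space_M: "prob_space M"
    and measurable_X: "\<And>i. i < n \<Longrightarrow> X i \<in> borel_measurable M"
begin

abbreviation vec_law :: "(nat \<Rightarrow> 'k) measure" where
  "vec_law \<equiv> distr M (PiM {..<n} (\<lambda>_. borel)) (\<lambda>\<omega>. \<lambda>i\<in>{..<n}. X i \<omega>)"

definition marg :: "nat \<Rightarrow> 'k measure" where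
  "marg i = distr M borel (if i < n then X i else (\<lambda>_. 0))"

sublocale M: prob_space M
  by (rule prob_space_M)

lemma prob_space_marg: "prob_space (marg i)"
  unfolding marg_def using measurable_X by (intro M.prob_space_distr) auto

sublocale P: product_law av "{..<n}" marg
  by (intro product_law.intro nonarch_field_axioms product_law_axioms.intro prob_space_marg)
     (simp_all add: marg_def)

lemma measurable_vector: "(\<lambda>\<omega>. \<lambda>i\<in>{..<n}. X i \<omega>) \<in> measurable M (PiM {..<n} (\<lambda>_. borel))"
  using measurable_X by (intro measurable_restrict) auto

lemma indep_vars_iff_vec_law_eq_PiM:
  "M.indep_vars (\<lambda>_. borel) X {..<n} \<longleftrightarrow> vec_law = PiM {..<n} marg"
proof (cases "n = 0")
  case True
  interpret vec_law: prob_space vec_law by (rule M.prob_space_distr[OF measurable_vector])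
  have "vec_law = PiM {..<n} marg"
  proof (rule P.prod.PiM_eqI)
    fix A :: "nat \<Rightarrow> 'k set"
    have "PiE {..<n} A = space vec_law" using True by (simp add: space_PiM)
    then show "emeasure vec_law (PiE {..<n} A) = (\<Prod>i\<in>{..<n}. emeasure (marg i) (A i))"
      using True vec_law.emeasure_space_1 by simp
  qed (use P.sets_PiM_marg in simp_all)
  moreover have "M.indep_vars (\<lambda>_. borel) X {..<n}"
    using True by (simp add: M.indep_vars_def M.indep_sets_def)
  ultimately show ?thesis by simp
next
  case False
  then have "M.indep_vars (\<lambda>_. borel) X {..<n} \<longleftrightarrow>
      vec_law = PiM {..<n} (\<lambda>i. distr M borel (X i))"
    using measurable_X by (subst M.indep_vars_iff_distr_eq_PiM') auto
  also have "PiM {..<n} (\<lambda>i. distr M borel (X i)) = PiM {..<n} marg"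
    by (rule PiM_cong) (auto simp: marg_def)
  finally show ?thesis .
qed

lemma K_gaussian_vec_if_indep:
  assumes indep: "M.indep_vars (\<lambda>_. borel) X {..<n}"
    and gaussian: "\<forall>i<n. K_gaussian_scalar av M (X i)"
  shows "K_gaussian_vec av n M (\<lambda>\<omega>. \<lambda>i\<in>{..<n}. X i \<omega>)"
  unfolding K_gaussian_vec_def K_gaussian_def Let_def
proof (intro conjI allI impI)
  show "(\<lambda>\<omega>. \<lambda>i\<in>{..<n}. X i \<omega>) \<in> measurable M (PiM {..<n} (\<lambda>_. borel))" by (rule measurable_vector)
  fix a11 a12 a21 a22 :: 'k assume orth: "orthonormal_pair av (a11, a12) (a21, a22)"
  have marg_gaussian: "distr (marg i \<Otimes>\<^sub>M marg i) (borel \<Otimes>\<^sub>M borel)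
      (\<lambda>(x1, x2). (a11 * x1 + a12 * x2, a21 * x1 + a22 * x2)) = marg i \<Otimes>\<^sub>M marg i"
    if i: "i \<in> {..<n}" for i
  proof -
    have "K_gaussian_scalar av M (X i)" using gaussian i by simp
    then have "distr (distr M borel (X i) \<Otimes>\<^sub>M distr M borel (X i)) (borel \<Otimes>\<^sub>M borel)
        (\<lambda>(x1, x2). (a11 * x1 + a12 * x2, a21 * x1 + a22 * x2)) = distr M borel (X i) \<Otimes>\<^sub>M distr M borel (X i)"
      using orth unfolding K_gaussian_scalar_def K_gaussian_def Let_def by blast
    then show ?thesis using i by (simp add: marg_def)
  qed
  have linear: "(\<lambda>(x1, x2). ((\<lambda>y z. \<lambda>i\<in>{..<n}. y i + z i) ((\<lambda>a y. \<lambda>i\<in>{..<n}. a * y i) a11 x1) ((\<lambda>a y. \<lambda>i\<in>{..<n}. a * y i) a12 x2),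
          (\<lambda>y z. \<lambda>i\<in>{..<n}. y i + z i) ((\<lambda>a y. \<lambda>i\<in>{..<n}. a * y i) a21 x1) ((\<lambda>a y. \<lambda>i\<in>{..<n}. a * y i) a22 x2)))
      = (\<lambda>(x1, x2). (\<lambda>i\<in>{..<n}. a11 * x1 i + a12 * x2 i, \<lambda>i\<in>{..<n}. a21 * x1 i + a22 * x2 i))"
    by (auto simp: fun_eq_iff)
  have law: "vec_law = PiM {..<n} marg" using indep_vars_iff_vec_law_eq_PiM indep by blast
  show "distr (vec_law \<Otimes>\<^sub>M vec_law) (PiM {..<n} (\<lambda>_. borel) \<Otimes>\<^sub>M PiM {..<n} (\<lambda>_. borel))
      (\<lambda>(x1, x2). ((\<lambda>y z. \<lambda>i\<in>{..<n}. y i + z i) ((\<lambda>a y. \<lambda>i\<in>{..<n}. a * y i) a11 x1) ((\<lambda>a y. \<lambda>i\<in>{..<n}. a * y i) a12 x2),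
          (\<lambda>y z. \<lambda>i\<in>{..<n}. y i + z i) ((\<lambda>a y. \<lambda>i\<in>{..<n}. a * y i) a21 x1) ((\<lambda>a y. \<lambda>i\<in>{..<n}. a * y i) a22 x2)))
      = vec_law \<Otimes>\<^sub>M vec_law"
    unfolding linear law by (rule P.distr_linear_pair_PiM_marg[OF marg_gaussian])
qed

end

section \<open>Gaussian random vectors\<close>

locale gaussian_vector = random_vector av M n X
  for av :: "'k::{field,metric_space} \<Rightarrow> real" and M :: "'a measure" and n X +
  assumes gaussian: "K_gaussian_vec av n M (\<lambda>\<omega>. \<lambda>i\<in>{..<n}. X i \<omega>)"
begin

definition r :: "nat \<Rightarrow> real" where "r i = real_of_ereal (Linf_norm av M (X i))"

abbreviation max_weight :: "(nat \<Rightarrow> 'k) \<Rightarrow> real" where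
  "max_weight \<alpha> \<equiv> Max (insert 0 ((\<lambda>i. av (\<alpha> i) * r i) ` {..<n}))"

sublocale G: gaussian_law av "{..<n}" vec_law
  by (rule K_gaussian_vec_imp_gaussian_law[OF prob_space_M gaussian])

lemma marg_eq_distr_vec_law:
  assumes i: "i < n"
  shows "marg i = distr vec_law borel (\<lambda>x. x i)"
proof -
  have "distr vec_law borel (\<lambda>x. x i) = distr M borel ((\<lambda>x. x i) \<circ> (\<lambda>\<omega>. \<lambda>i\<in>{..<n}. X i \<omega>))"
    using i by (intro distr_distr measurable_vector measurable_component_singleton) simp
  also have "\<dots> = distr M borel (X i)" using i by (intro distr_cong) auto
  finally show ?thesis using i by (simp add: marg_def)
qed

lemma r_esssup:
  assumes i: "i < n"
  shows "Linf_norm av M (X i) = ereal (r i)" "0 \<le> r i" "AE \<omega> in M. av (X i \<omega>) \<le> r i"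
    "\<And>c. (AE \<omega> in M. av (X i \<omega>) \<le> c) \<Longrightarrow> r i \<le> c" "r i \<in> range av"
proof -
  have i': "i \<in> {..<n}" using i by simp
  obtain R where "AE x in vec_law. av (x i) < R" using G.AE_coord_bounded i by auto
  moreover have "{x \<in> space (PiM {..<n} (\<lambda>_. borel)). av (x i) < R} \<in> sets (PiM {..<n} (\<lambda>_. borel :: 'k measure))"
    using i' by measurable
  ultimately have bounded: "AE \<omega> in M. av (X i \<omega>) < R"
    using i by (subst (asm) AE_distr_iff[OF measurable_vector]) auto
  obtain s where
    "esssup M (\<lambda>\<omega>. ereal (av (X i \<omega>))) = ereal s" "0 \<le> s" "AE \<omega> in M. av (X i \<omega>) \<le> s"
    "\<forall>c. (AE \<omega> in M. av (X i \<omega>) \<le> c) \<longrightarrow> s \<le> c" "s \<in> range av"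
    using esssup_av_eq_ereal[OF prob_space_M measurable_X[OF i] bounded] by blast
  then show "Linf_norm av M (X i) = ereal (r i)" "0 \<le> r i" "AE \<omega> in M. av (X i \<omega>) \<le> r i"
    "\<And>c. (AE \<omega> in M. av (X i \<omega>) \<le> c) \<Longrightarrow> r i \<le> c" "r i \<in> range av"
    unfolding r_def Linf_norm_def by auto
qed

lemma r_eq_0_if_AE_le_theta:
  assumes i: "i < n" and le: "AE \<omega> in M. av (X i \<omega>) \<le> theta * r i"
  shows "r i = 0"
proof -
  have "r i \<le> theta * r i" by (rule r_esssup(4)[OF i le])
  then show ?thesis using r_esssup(2)[OF i] theta_less_1 by (simp add: mult_le_cancel_right1)
qed

lemma AE_M_box: "AE \<omega> in M. \<forall>i\<in>{..<n}. av (X i \<omega>) \<le> r i"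
  by (rule AE_finite_allI) (auto intro: r_esssup(3))

lemma AE_vec_law_box: "AE x in vec_law. \<forall>i\<in>{..<n}. av (x i) \<le> r i"
proof -
  have "{x \<in> space (PiM {..<n} (\<lambda>_. borel)). \<forall>i\<in>{..<n}. av (x i) \<le> r i} \<in> sets (PiM {..<n} (\<lambda>_. borel :: 'k measure))"
    by measurable
  then show ?thesis using AE_M_box by (subst AE_distr_iff[OF measurable_vector]) auto
qed

lemma AE_PiM_marg_box: "AE z in PiM {..<n} marg. \<forall>i\<in>{..<n}. av (z i) \<le> r i"
proof -
  have "emeasure (marg i) {w. av w \<le> r i} = 1" if i: "i < n" for i
  proof -
    have "emeasure (marg i) {w. av w \<le> r i} = emeasure M {\<omega> \<in> space M. av (X i \<omega>) \<le> r i}"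
      using i measurable_X[OF i] by (simp add: marg_def emeasure_distr vimage_def Int_def conj_commute)
    also have "\<dots> = 1"
      using r_esssup(3)[OF i] measurable_X[OF i] by (intro M.emeasure_eq_1_AE) (auto elim: AE_mp)
    finally show ?thesis .
  qed
  moreover have "{w::'k. av w \<le> r i} \<in> sets (marg i)" for i
    using P.sets_marg[of i] by simp
  ultimately have "emeasure (PiM {..<n} marg) (PiE {..<n} (\<lambda>i. {w. av w \<le> r i})) = 1"
    by (subst P.prod.emeasure_PiM) auto
  then have "AE z in PiM {..<n} marg. z \<in> PiE {..<n} (\<lambda>i. {w. av w \<le> r i})"
    by (intro P.prod.AE_prob_1) (simp add: measure_def)
  then show ?thesis by (rule AE_mp) (auto intro!: AE_I2 simp: PiE_iff)
qed

text \<open>For a single coordinate, orthogonality is automatic and the factor \<open>theta\<close> in \<open>gaussian_orth\<close>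
  is supplied by \<open>r_eq_0_if_AE_le_theta\<close>.\<close>
lemma marginal_gaussian_orth:
  assumes i: "i < n"
  shows "gaussian_orth av {i} (distr vec_law (PiM {i} (\<lambda>_. borel)) (\<lambda>x. restrict x {i})) r"
proof -
  let ?E1 = "PiM {i} (\<lambda>_. borel :: 'k measure)"
  let ?R = "\<lambda>x. restrict x {i}"
  interpret G1: gaussian_law av "{i}" "distr vec_law ?E1 ?R"
    using i by (intro G.gaussian_law_restrict) auto
  have R: "?R \<in> measurable vec_law ?E1" using measurable_restrict_subset[of "{i}" "{..<n}"] i by simp
  have AE_marginal: "(AE x in distr vec_law ?E1 ?R. P (x i)) \<longleftrightarrow> (AE \<omega> in M. P (X i \<omega>))"
    if S1: "{x \<in> space ?E1. P (x i)} \<in> sets ?E1" for P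
  proof -
    have "?R -` {x \<in> space ?E1. P (x i)} \<inter> space (PiM {..<n} (\<lambda>_. borel)) = {x \<in> space (PiM {..<n} (\<lambda>_. borel)). P (x i)}"
      by (auto simp: space_PiM)
    with measurable_sets[OF measurable_restrict_subset[of "{i}" "{..<n}"] S1] i
    have S: "{x \<in> space (PiM {..<n} (\<lambda>_. borel)). P (x i)} \<in> sets (PiM {..<n} (\<lambda>_. borel :: 'k measure))"
      by simp
    show ?thesis
      using i by (simp add: AE_distr_iff[OF R S1] AE_distr_iff[OF measurable_vector S])
  qed
  show ?thesis
  proof unfold_locales
    have "AE x in distr vec_law ?E1 ?R. av (x i) \<le> r i"
      using r_esssup(3)[OF i] by (subst AE_marginal) measurable
    then show "AE x in distr vec_law ?E1 ?R. \<forall>k\<in>{i}. av (x k) \<le> r k" by simp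
  next
    fix \<alpha> :: "nat \<Rightarrow> 'k"
    have Max: "Max (insert 0 ((\<lambda>k. av (\<alpha> k) * r k) ` {i})) = av (\<alpha> i) * r i"
      using r_esssup(2)[OF i] by (simp add: max_def)
    assume "AE x in distr vec_law ?E1 ?R. av (\<Sum>k\<in>{i}. \<alpha> k * x k) \<le> theta * Max (insert 0 ((\<lambda>k. av (\<alpha> k) * r k) ` {i}))"
    then have "AE x in distr vec_law ?E1 ?R. av (\<alpha> i) * av (x i) \<le> av (\<alpha> i) * (theta * r i)"
      unfolding Max by (simp add: av_mult mult.left_commute)
    then have "AE \<omega> in M. av (\<alpha> i) * av (X i \<omega>) \<le> av (\<alpha> i) * (theta * r i)"
      by (subst (asm) AE_marginal) measurable
    then have "\<alpha> i = 0 \<or> (AE \<omega> in M. av (X i \<omega>) \<le> theta * r i)"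
      by (cases "\<alpha> i = 0") (auto elim!: AE_mp intro!: AE_I2)
    then have "\<alpha> i = 0 \<or> r i = 0" using r_eq_0_if_AE_le_theta[OF i] by blast
    then show "Max (insert 0 ((\<lambda>k. av (\<alpha> k) * r k) ` {i})) = 0" unfolding Max by auto
  qed (use r_esssup[OF i] in auto)
qed

lemma marg_shift_invariant:
  assumes i: "i < n" and y: "av y \<le> r i" and A: "A \<in> sets borel"
  shows "emeasure (marg i) ((\<lambda>w. w + y) -` A) = emeasure (marg i) A"
proof -
  let ?E1 = "PiM {i} (\<lambda>_. borel :: 'k measure)"
  let ?\<mu>1 = "distr vec_law ?E1 (\<lambda>x. restrict x {i})"
  interpret O1: gaussian_orth av "{i}" ?\<mu>1 r by (rule marginal_gaussian_orth[OF i])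
  let ?T = "\<lambda>x. \<lambda>k\<in>{i}. x k + y"
  let ?A = "{x \<in> space ?E1. x i \<in> A}"
  have coord: "(\<lambda>x. x i) \<in> measurable ?\<mu>1 borel" by simp
  have T: "?T \<in> measurable ?\<mu>1 ?E1" by (rule O1.measurable_shift)
  have "(\<lambda>x. \<lambda>k\<in>{i}. x k + (\<lambda>k\<in>{i}. y) k) = ?T" by (auto simp: fun_eq_iff)
  with O1.distr_shift_eq[of "\<lambda>k\<in>{i}. y"] y have invariant: "distr ?\<mu>1 ?E1 ?T = ?\<mu>1" by simp
  have marg: "marg i = distr ?\<mu>1 borel (\<lambda>x. x i)"
    using i by (simp add: marg_eq_distr_vec_law distr_distr measurable_restrict_subset o_def)
  have "(\<lambda>w. w + y) -` A \<in> sets borel" using measurable_sets[OF P.measurable_add_const A] by simp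
  then have "emeasure (marg i) ((\<lambda>w. w + y) -` A) = emeasure ?\<mu>1 ((\<lambda>x. x i) -` ((\<lambda>w. w + y) -` A) \<inter> space ?\<mu>1)"
    unfolding marg by (rule emeasure_distr[OF coord])
  also have "(\<lambda>x. x i) -` ((\<lambda>w. w + y) -` A) \<inter> space ?\<mu>1 = ?T -` ?A \<inter> space ?\<mu>1"
    by (auto simp: space_PiM)
  also have "emeasure ?\<mu>1 (?T -` ?A \<inter> space ?\<mu>1) = emeasure ?\<mu>1 ?A"
    using emeasure_distr[OF T, of ?A] A invariant by simp
  also have "?A = (\<lambda>x. x i) -` A \<inter> space ?\<mu>1" by auto
  also have "emeasure ?\<mu>1 \<dots> = emeasure (marg i) A"
    unfolding marg by (rule emeasure_distr[OF coord A, symmetric])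
  finally show ?thesis .
qed

lemma Max_weight_ereal:
  "Max (insert 0 ((\<lambda>i. ereal (av (\<alpha> i)) * Linf_norm av M (X i)) ` {..<n})) = ereal (max_weight \<alpha>)"
proof -
  have "(\<lambda>i. ereal (av (\<alpha> i)) * Linf_norm av M (X i)) ` {..<n} = (\<lambda>i. ereal (av (\<alpha> i) * r i)) ` {..<n}"
    by (rule image_cong[OF refl]) (simp add: r_esssup(1))
  moreover have "ereal (max_weight \<alpha>) = Max (ereal ` insert 0 ((\<lambda>i. av (\<alpha> i) * r i) ` {..<n}))"
    by (rule mono_Max_commute) (auto simp: mono_def)
  ultimately show ?thesis by (simp add: image_image zero_ereal_def)
qed

lemma AE_linear_form_iff:
  "(AE x in vec_law. av (\<Sum>i\<in>{..<n}. \<alpha> i * x i) \<le> c) \<longleftrightarrow> (AE \<omega> in M. av (\<Sum>i\<in>{..<n}. \<alpha> i * X i \<omega>) \<le> c)"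
proof -
  have "{x \<in> space (PiM {..<n} (\<lambda>_. borel)). av (\<Sum>i\<in>{..<n}. \<alpha> i * x i) \<le> c} \<in> sets (PiM {..<n} (\<lambda>_. borel :: 'k measure))"
    by measurable
  then show ?thesis by (simp add: AE_distr_iff[OF measurable_vector])
qed

lemma Linf_norm_linear_form_le:
  assumes "AE \<omega> in M. av (\<Sum>i\<in>{..<n}. \<alpha> i * X i \<omega>) \<le> c"
  shows "Linf_norm av M (\<lambda>\<omega>. \<Sum>i\<in>{..<n}. \<alpha> i * X i \<omega>) \<le> ereal c"
  unfolding Linf_norm_def using assms measurable_X
  by (intro esssup_I) (auto elim: AE_mp)

lemma orthogonal_imp_gaussian_orth:
  assumes "Linf_orthogonal av M X {..<n}"
  shows "gaussian_orth av {..<n} vec_law r"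
proof (intro gaussian_orth.intro G.gaussian_law_axioms gaussian_orth_axioms.intro)
  fix i assume "i \<in> {..<n}"
  then show "0 \<le> r i" "r i \<in> range av" using r_esssup(2,5) by auto
next
  show "AE x in vec_law. \<forall>i\<in>{..<n}. av (x i) \<le> r i" by (rule AE_vec_law_box)
next
  fix \<alpha> :: "nat \<Rightarrow> 'k"
  assume "AE x in vec_law. av (\<Sum>i\<in>{..<n}. \<alpha> i * x i) \<le> theta * max_weight \<alpha>"
  then have "Linf_norm av M (\<lambda>\<omega>. \<Sum>i\<in>{..<n}. \<alpha> i * X i \<omega>) \<le> ereal (theta * max_weight \<alpha>)"
    by (intro Linf_norm_linear_form_le) (simp add: AE_linear_form_iff)
  moreover have "Linf_norm av M (\<lambda>\<omega>. \<Sum>i\<in>{..<n}. \<alpha> i * X i \<omega>) = ereal (max_weight \<alpha>)"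
    using assms unfolding Linf_orthogonal_def Max_weight_ereal by blast
  ultimately have "max_weight \<alpha> \<le> theta * max_weight \<alpha>" by simp
  moreover have "0 \<le> max_weight \<alpha>" by (intro Max_ge) auto
  ultimately show "max_weight \<alpha> = 0" using theta_less_1 by (simp add: mult_le_cancel_right1)
qed

lemma distr_shift_PiM_marg_box:
  assumes "\<forall>i\<in>{..<n}. av (t i) \<le> r i"
  shows "distr (PiM {..<n} marg) (PiM {..<n} (\<lambda>_. borel)) (\<lambda>x. \<lambda>i\<in>{..<n}. x i + t i) = PiM {..<n} marg"
  using assms by (intro P.distr_shift_PiM_marg marg_shift_invariant) auto

text \<open>Both laws are invariant under the shifts by the box \<open>|t\<^sub>i| \<le> r\<^sub>i\<close>, in which both are concentrated.\<close>
lemma orthogonal_imp_vec_law_eq_PiM: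
  assumes "Linf_orthogonal av M X {..<n}"
  shows "vec_law = PiM {..<n} marg"
proof (rule eq_if_shift_invariant_AE)
  interpret O: gaussian_orth av "{..<n}" vec_law r by (rule orthogonal_imp_gaussian_orth[OF assms])
  show "AE z in PiM {..<n} marg. distr vec_law (PiM {..<n} (\<lambda>_. borel)) (\<lambda>x. \<lambda>i\<in>{..<n}. x i + z i) = vec_law"
    using AE_PiM_marg_box
  proof (rule AE_mp, intro AE_I2 impI)
    fix z assume "z \<in> space (PiM {..<n} marg)" "\<forall>i\<in>{..<n}. av (z i) \<le> r i"
    then show "distr vec_law (PiM {..<n} (\<lambda>_. borel)) (\<lambda>x. \<lambda>i\<in>{..<n}. x i + z i) = vec_law"
      by (intro O.distr_shift_eq) (simp_all add: P.space_PiM_marg)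
  qed
  show "AE x in vec_law. distr (PiM {..<n} marg) (PiM {..<n} (\<lambda>_. borel)) (\<lambda>z. \<lambda>i\<in>{..<n}. x i + z i) = PiM {..<n} marg"
    using AE_vec_law_box
  proof (rule AE_mp, intro AE_I2 impI)
    fix x assume "\<forall>i\<in>{..<n}. av (x i) \<le> r i"
    then have "distr (PiM {..<n} marg) (PiM {..<n} (\<lambda>_. borel)) (\<lambda>z. \<lambda>i\<in>{..<n}. z i + x i) = PiM {..<n} marg"
      by (rule distr_shift_PiM_marg_box)
    then show "distr (PiM {..<n} marg) (PiM {..<n} (\<lambda>_. borel)) (\<lambda>z. \<lambda>i\<in>{..<n}. x i + z i) = PiM {..<n} marg"
      by (simp add: add.commute)
  qed
qed (simp_all add: G.law.prob_space_axioms P.prob_space_PiM_marg P.sets_PiM_marg)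

text \<open>The upper bound is the ultrametric inequality. For the lower bound pick \<open>j\<close> attaining the
  maximal weight and \<open>|y| = r\<^sub>j\<close>: the product law is invariant under the shift by \<open>y e\<^sub>j\<close>.\<close>
lemma vec_law_eq_PiM_imp_orthogonal:
  assumes law: "vec_law = PiM {..<n} marg"
  shows "Linf_orthogonal av M X {..<n}"
  unfolding Linf_orthogonal_def Max_weight_ereal
proof (intro conjI ballI allI)
  fix i assume "i \<in> {..<n}"
  then show "X i \<in> borel_measurable M" "Linf_norm av M (X i) < \<infinity>" using measurable_X r_esssup(1) by auto
next
  fix \<alpha> :: "nat \<Rightarrow> 'k"
  let ?W = "\<lambda>\<omega>. \<Sum>i\<in>{..<n}. \<alpha> i * X i \<omega>"
  have AE_le: "AE \<omega> in M. av (?W \<omega>) \<le> max_weight \<alpha>"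
    using AE_M_box
  proof (rule AE_mp, intro AE_I2 impI)
    fix \<omega> assume box: "\<forall>i\<in>{..<n}. av (X i \<omega>) \<le> r i"
    show "av (?W \<omega>) \<le> max_weight \<alpha>"
    proof (rule av_sum_le)
      fix i assume i: "i \<in> {..<n}"
      have "av (\<alpha> i * X i \<omega>) \<le> av (\<alpha> i) * r i" using box i by (simp add: av_mult mult_left_mono)
      also have "\<dots> \<le> max_weight \<alpha>" using i by (intro Max_ge) auto
      finally show "av (\<alpha> i * X i \<omega>) \<le> max_weight \<alpha>" .
    qed (auto intro: Max_ge)
  qed
  then have lt: "AE \<omega> in M. av (?W \<omega>) < max_weight \<alpha> + 1" by (auto elim: AE_mp)
  have "?W \<in> borel_measurable M" using measurable_X by (intro measurable_sum_K measurable_cmult_K) auto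
  from esssup_av_eq_ereal[OF prob_space_M this lt] obtain v where
    v: "Linf_norm av M ?W = ereal v" "0 \<le> v" "AE \<omega> in M. av (?W \<omega>) \<le> v"
    unfolding Linf_norm_def by blast
  have "max_weight \<alpha> \<le> v"
  proof (cases "max_weight \<alpha> = 0")
    case False
    moreover have "max_weight \<alpha> \<in> insert 0 ((\<lambda>i. av (\<alpha> i) * r i) ` {..<n})" by (intro Max_in) auto
    ultimately obtain j where j: "j < n" "max_weight \<alpha> = av (\<alpha> j) * r j" by auto
    obtain y where y: "av y = r j" using r_esssup(5)[OF j(1)] by (metis rangeE)
    let ?t = "\<lambda>i. if i = j then y else 0"
    have "distr vec_law (PiM {..<n} (\<lambda>_. borel)) (\<lambda>x. \<lambda>i\<in>{..<n}. x i + ?t i) = vec_law"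
      unfolding law using y r_esssup(2) by (intro distr_shift_PiM_marg_box) auto
    moreover have "AE x in vec_law. av (\<Sum>i\<in>{..<n}. \<alpha> i * x i) \<le> v"
      using v(3) by (simp add: AE_linear_form_iff)
    ultimately have "av (\<Sum>i\<in>{..<n}. \<alpha> i * ?t i) \<le> v"
      by (intro av_linear_form_le_if_shift_invariant[OF G.law.prob_space_axioms]) simp_all
    moreover have "(\<Sum>i\<in>{..<n}. \<alpha> i * ?t i) = (\<Sum>i\<in>{..<n}. if i = j then \<alpha> j * y else 0)"
      by (intro sum.cong) auto
    then have "(\<Sum>i\<in>{..<n}. \<alpha> i * ?t i) = \<alpha> j * y" using j(1) by simp
    ultimately show ?thesis using j y by (simp add: av_mult)
  qed (use v(2) in simp)
  moreover have "v \<le> max_weight \<alpha>"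
    using Linf_norm_linear_form_le[OF AE_le] v(1) by (simp del: Max_ge_iff Max_le_iff)
  ultimately have "max_weight \<alpha> = v" by (rule order.antisym)
  then show "Linf_norm av M ?W = ereal (max_weight \<alpha>)" using v(1) by simp
qed

end

theorem theorem4p8:
  fixes av :: "'k::{field,metric_space} \<Rightarrow> real" and M :: "'a measure" and n :: nat
  assumes "local_field_abs av" and "prob_space M"
  shows "(\<forall>X :: nat \<Rightarrow> 'a \<Rightarrow> 'k.
            K_gaussian_vec av n M (\<lambda>\<omega>. \<lambda>i\<in>{..<n}. X i \<omega>) \<longrightarrow>
            (Linf_orthogonal av M X {..<n} \<longleftrightarrow> prob_space.indep_vars M (\<lambda>_. borel) X {..<n}))
       \<and> (\<forall>X :: nat \<Rightarrow> 'a \<Rightarrow> 'k.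
            prob_space.indep_vars M (\<lambda>_. borel) X {..<n} \<and> (\<forall>i<n. K_gaussian_scalar av M (X i)) \<longrightarrow>
            K_gaussian_vec av n M (\<lambda>\<omega>. \<lambda>i\<in>{..<n}. X i \<omega>))"
proof -
  interpret nonarch_field av by unfold_locales (rule assms(1))
  show ?thesis
  proof (intro conjI allI impI)
    fix X :: "nat \<Rightarrow> 'a \<Rightarrow> 'k"
    assume gaussian: "K_gaussian_vec av n M (\<lambda>\<omega>. \<lambda>i\<in>{..<n}. X i \<omega>)"
    interpret gaussian_vector av M n X
      by (intro gaussian_vector.intro random_vector.intro gaussian_vector_axioms.intro
          random_vector_axioms.intro nonarch_field_axioms assms(2) gaussian K_gaussian_vec_measurable[OF gaussian])
    show "Linf_orthogonal av M X {..<n} \<longleftrightarrow> M.indep_vars (\<lambda>_. borel) X {..<n}"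
      using orthogonal_imp_vec_law_eq_PiM vec_law_eq_PiM_imp_orthogonal indep_vars_iff_vec_law_eq_PiM
      by blast
  next
    fix X :: "nat \<Rightarrow> 'a \<Rightarrow> 'k"
    assume indep_gaussian: "prob_space.indep_vars M (\<lambda>_. borel) X {..<n} \<and> (\<forall>i<n. K_gaussian_scalar av M (X i))"
    have "X i \<in> borel_measurable M" if "i < n" for i
      using indep_gaussian that unfolding K_gaussian_scalar_def K_gaussian_def by blast
    then interpret random_vector av M n X
      by (intro random_vector.intro random_vector_axioms.intro nonarch_field_axioms assms(2))
    show "K_gaussian_vec av n M (\<lambda>\<omega>. \<lambda>i\<in>{..<n}. X i \<omega>)"
      using indep_gaussian by (intro K_gaussian_vec_if_indep) auto
  qed
qed

end
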